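(* Let $\sigma\ge0$, $\gamma>0$, $V=\sqrt{1+\sigma}$, let $(n^\varepsilon,u^\varepsilon,\phi^\varepsilon)$ be the solitary wave solution, and set $\widetilde N_\varepsilon=\frac{n^\varepsilon-1}{\varepsilon}$, $\widetilde E_\varepsilon=\frac{-(\phi^\varepsilon)'}{\varepsilon}$. There exist constants $C_*,\varepsilon_1>0$ and, for each non-negative integer $k$, a constant $C_k>0$ ($C_*,\varepsilon_1$ independent of $k$; all independent of $\varepsilon$ and $\xi$) such that for all $0<\varepsilon<\varepsilon_1$ and all $\xi\ge0$, \[ |\widetilde N_\varepsilon^{(k)}(\xi)|+|\widetilde E_\varepsilon^{(k)}(\xi)|\le C_ke^{-C_*\xi},\qquad \frac{|(u^\varepsilon)^{(k)}(\xi)|}{\varepsilon}+\frac{|(\phi^\varepsilon)^{(k)}(\xi)|}{\varepsilon}\le C_ke^{-C_*\xi}, \] where $f^{(k)}$ denotes the $k$-th derivative in $\xi$.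
   Context: For $\varepsilon>0$, consider the system in $\xi\in\mathbb{R}$: $-(V+\gamma\varepsilon)n'+(nu)'=0$, $-(V+\gamma\varepsilon)u'+uu'+\sigma n'/n=-\phi'$, $\varepsilon\phi''=e^\phi-n$, with $n\to1,u\to0,\phi\to0$ as $|\xi|\to\infty$. With $V=\sqrt{1+\sigma}$, for all sufficiently small $\varepsilon>0$ it has a non-trivial smooth solution unique up to translation; the "solitary wave solution" $(n^\varepsilon,u^\varepsilon,\phi^\varepsilon)$ is the translate that is even in $\xi$ and has all components strictly decreasing on $(0,\infty)$. *)

theory Defs
  imports "HOL-Analysis.Analysis"
begin

definition smooth_fun :: "(real \<Rightarrow> real) \<Rightarrow> bool" where
  "smooth_fun f \<longleftrightarrow> (\<forall>k x. ((deriv ^^ k) f) differentiable (at x))"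

definition tw_solution ::
  "real \<Rightarrow> real \<Rightarrow> real \<Rightarrow> real \<Rightarrow> (real \<Rightarrow> real) \<Rightarrow> (real \<Rightarrow> real) \<Rightarrow> (real \<Rightarrow> real) \<Rightarrow> bool" where
  "tw_solution \<sigma> \<gamma> V \<epsilon> n u \<phi> \<longleftrightarrow>
     smooth_fun n \<and> smooth_fun u \<and> smooth_fun \<phi> \<and>
     (\<forall>\<xi>. n \<xi> > 0) \<and>
     (\<forall>\<xi>. - (V + \<gamma> * \<epsilon>) * deriv n \<xi> + deriv (\<lambda>x. n x * u x) \<xi> = 0) \<and>
     (\<forall>\<xi>. - (V + \<gamma> * \<epsilon>) * deriv u \<xi> + u \<xi> * deriv u \<xi> + \<sigma> * deriv n \<xi> / n \<xi>
            = - deriv \<phi> \<xi>) \<and>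
     (\<forall>\<xi>. \<epsilon> * deriv (deriv \<phi>) \<xi> = exp (\<phi> \<xi>) - n \<xi>) \<and>
     (n \<longlongrightarrow> 1) at_top \<and> (n \<longlongrightarrow> 1) at_bot \<and>
     (u \<longlongrightarrow> 0) at_top \<and> (u \<longlongrightarrow> 0) at_bot \<and>
     (\<phi> \<longlongrightarrow> 0) at_top \<and> (\<phi> \<longlongrightarrow> 0) at_bot"

definition solitary_wave ::
  "real \<Rightarrow> real \<Rightarrow> real \<Rightarrow> (real \<Rightarrow> real) \<Rightarrow> (real \<Rightarrow> real) \<Rightarrow> (real \<Rightarrow> real) \<Rightarrow> bool" where
  "solitary_wave \<sigma> \<gamma> \<epsilon> n u \<phi> \<longleftrightarrow>
     tw_solution \<sigma> \<gamma> (sqrt (1 + \<sigma>)) \<epsilon> n u \<phi> \<and>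
     \<not> (n = (\<lambda>_. 1) \<and> u = (\<lambda>_. 0) \<and> \<phi> = (\<lambda>_. 0)) \<and>
     (\<forall>\<xi>. n (- \<xi>) = n \<xi> \<and> u (- \<xi>) = u \<xi> \<and> \<phi> (- \<xi>) = \<phi> \<xi>) \<and>
     strict_antimono_on {0<..} n \<and> strict_antimono_on {0<..} u \<and> strict_antimono_on {0<..} \<phi>"

end

theory Submission
  imports Defs
begin

text \<open>Along the wave the mass and momentum equations integrate to \<open>u = c (1 - 1/n)\<close> and
  \<open>\<phi> = Phi c \<sigma> n\<close>, and the Poisson equation has the first integral
  \<open>\<epsilon> \<phi>'\<^sup>2/2 = sagdeev c \<sigma> n\<close>. In the rescaled variables \<open>Nt = (n - 1)/\<epsilon>\<close>, \<open>\<psi> = \<phi>/\<epsilon>\<close>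
  these say that \<open>\<psi>\<close>, \<open>\<psi>'\<^sup>2\<close> and \<open>\<psi>''\<close> are \<open>O(\<epsilon>)\<close>-perturbations of the relations obeyed by
  the KdV soliton. Comparison with the KdV profile bounds \<open>Nt\<close> by \<open>6\<gamma>/V\<close>, and then the Lyapunov
  function \<open>\<Lambda> = \<psi> + \<beta> \<psi>'\<close> satisfies \<open>\<Lambda>' + \<kappa> \<Lambda> \<le> 0\<close> and \<open>\<Lambda> \<ge> Nt/2\<close> on \<open>[0, \<infinity>)\<close>, so \<open>Nt\<close>,
  \<open>\<psi>\<close>, \<open>\<psi>'\<close>, \<open>\<psi>''\<close> decay like \<open>exp (- \<kappa> \<xi>)\<close> with constants independent of \<open>\<epsilon>\<close>.
  Higher derivatives follow by induction on the order from a closed system of ODEs for \<open>Nt\<close>,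
  \<open>\<psi>\<close>, \<open>(exp \<phi> - 1)/\<epsilon>\<close>, \<open>1/n\<close> and \<open>dNt/d\<psi>\<close> whose coefficients are bounded uniformly in
  \<open>\<epsilon>\<close>; uniformity is expressed by bounds over the set of all such waves.\<close>

section \<open>Closure properties of smooth functions\<close>

definition differentiable_upto :: "nat \<Rightarrow> (real \<Rightarrow> real) \<Rightarrow> bool" where
  "differentiable_upto k f \<longleftrightarrow> (\<forall>j\<le>k. \<forall>x. (deriv ^^ j) f differentiable (at x))"

lemma smooth_fun_iff_differentiable_upto: "smooth_fun f \<longleftrightarrow> (\<forall>k. differentiable_upto k f)"
  unfolding smooth_fun_def differentiable_upto_def by blast

lemma differentiable_upto_mono: "differentiable_upto k f \<Longrightarrow> j \<le> k \<Longrightarrow> differentiable_upto j f"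
  unfolding differentiable_upto_def by auto

lemma differentiable_upto_imp_differentiable: "differentiable_upto k f \<Longrightarrow> f differentiable (at x)"
  unfolding differentiable_upto_def by (metis funpow_0 le0)

lemma higher_deriv_Suc: "(deriv ^^ Suc j) f = (deriv ^^ j) (deriv f)"
  by (simp add: funpow_Suc_right del: funpow.simps)

lemma differentiable_upto_Suc:
  "differentiable_upto (Suc k) f \<longleftrightarrow> (\<forall>x. f differentiable (at x)) \<and> differentiable_upto k (deriv f)"
  unfolding differentiable_upto_def
proof safe
  fix j x assume "\<forall>j\<le>Suc k. \<forall>x. (deriv ^^ j) f differentiable at x" "j \<le> k"
  then show "(deriv ^^ j) (deriv f) differentiable at x" by (metis higher_deriv_Suc Suc_le_mono)
next
  fix x assume "\<forall>j\<le>Suc k. \<forall>x. (deriv ^^ j) f differentiable at x"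
  then show "f differentiable at x" by (metis funpow_0 le0)
next
  fix j x assume "\<forall>x. f differentiable at x" "\<forall>j\<le>k. \<forall>x. (deriv ^^ j) (deriv f) differentiable at x"
    "j \<le> Suc k"
  then show "(deriv ^^ j) f differentiable at x"
    by (cases j) (auto simp: higher_deriv_Suc simp del: funpow.simps)
qed

lemma real_differentiable_imp_field_differentiable:
  "(f :: real \<Rightarrow> real) differentiable at x \<Longrightarrow> f field_differentiable at x"
  by (simp add: field_differentiable_def real_differentiable_def)

lemma deriv_add_fun:
  "(\<And>x. (f :: real \<Rightarrow> real) differentiable at x) \<Longrightarrow> (\<And>x. g differentiable at x) \<Longrightarrow>
   deriv (\<lambda>x. f x + g x) = (\<lambda>x. deriv f x + deriv g x)"
  by (rule ext, rule deriv_add) (metis real_differentiable_imp_field_differentiable)+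

lemma deriv_mult_fun:
  "(\<And>x. (f :: real \<Rightarrow> real) differentiable at x) \<Longrightarrow> (\<And>x. g differentiable at x) \<Longrightarrow>
   deriv (\<lambda>x. f x * g x) = (\<lambda>x. f x * deriv g x + deriv f x * g x)"
  by (rule ext, rule deriv_mult) (metis real_differentiable_imp_field_differentiable)+

lemma deriv_cmult_fun:
  "(\<And>x. (f :: real \<Rightarrow> real) differentiable at x) \<Longrightarrow> deriv (\<lambda>x. a * f x) = (\<lambda>x. a * deriv f x)"
  by (rule ext, rule deriv_cmult) (metis real_differentiable_imp_field_differentiable)+

lemma higher_deriv_add:
  "differentiable_upto k f \<Longrightarrow> differentiable_upto k g \<Longrightarrow> j \<le> Suc k \<Longrightarrow>
   (deriv ^^ j) (\<lambda>x. f x + g x) = (\<lambda>x. (deriv ^^ j) f x + (deriv ^^ j) g x)"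
proof (induction j)
  case (Suc j)
  then have "\<And>x. (deriv ^^ j) f differentiable at x" "\<And>x. (deriv ^^ j) g differentiable at x"
    unfolding differentiable_upto_def by auto
  then show ?case using Suc by (simp add: deriv_add_fun)
qed simp

lemma higher_deriv_cmult:
  "differentiable_upto k f \<Longrightarrow> j \<le> Suc k \<Longrightarrow> (deriv ^^ j) (\<lambda>x. a * f x) = (\<lambda>x. a * (deriv ^^ j) f x)"
proof (induction j)
  case (Suc j)
  then have "\<And>x. (deriv ^^ j) f differentiable at x"
    unfolding differentiable_upto_def by auto
  then show ?case using Suc by (simp add: deriv_cmult_fun)
qed simp

lemma higher_deriv_const: "j \<ge> 1 \<Longrightarrow> (deriv ^^ j) (\<lambda>x. a) = (\<lambda>x. 0)"
proof (induction j)
  case (Suc j) then show ?case by (cases j) auto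
qed simp

lemma differentiable_upto_add:
  assumes "differentiable_upto k f" "differentiable_upto k g"
  shows "differentiable_upto k (\<lambda>x. f x + g x)"
  unfolding differentiable_upto_def
proof safe
  fix j x assume "j \<le> k"
  then have "(deriv ^^ j) (\<lambda>x. f x + g x) = (\<lambda>x. (deriv ^^ j) f x + (deriv ^^ j) g x)"
    using assms by (intro higher_deriv_add[of k]) auto
  then show "(deriv ^^ j) (\<lambda>x. f x + g x) differentiable at x"
    using assms \<open>j \<le> k\<close> by (simp add: differentiable_upto_def)
qed

lemma differentiable_upto_cmult: "differentiable_upto k f \<Longrightarrow> differentiable_upto k (\<lambda>x. a * f x)"
  using higher_deriv_cmult[of k f _ a] by (auto simp: differentiable_upto_def)

lemma differentiable_upto_const: "differentiable_upto k (\<lambda>x. a)"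
  unfolding differentiable_upto_def
proof safe
  fix j x show "(deriv ^^ j) (\<lambda>x. a) differentiable at x"
    by (cases "j = 0") (auto simp: higher_deriv_const)
qed

lemma differentiable_upto_mult:
  "differentiable_upto k f \<Longrightarrow> differentiable_upto k g \<Longrightarrow> differentiable_upto k (\<lambda>x. f x * g x)"
proof (induction k arbitrary: f g)
  case 0 then show ?case by (auto simp: differentiable_upto_def)
next
  case (Suc k)
  from Suc.prems have "\<And>x. f differentiable at x" "\<And>x. g differentiable at x"
    and "differentiable_upto k (deriv f)" "differentiable_upto k (deriv g)"
    by (auto simp: differentiable_upto_Suc)
  moreover have "differentiable_upto k f" "differentiable_upto k g"
    using Suc.prems differentiable_upto_mono by auto
  ultimately show ?case
    by (simp add: differentiable_upto_Suc deriv_mult_fun differentiable_upto_add Suc.IH)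
qed

lemma differentiable_upto_inverse:
  "differentiable_upto k f \<Longrightarrow> (\<And>x. f x \<noteq> 0) \<Longrightarrow> differentiable_upto k (\<lambda>x. inverse (f x))"
proof (induction k)
  case 0
  then show ?case
    by (simp add: differentiable_upto_def differentiable_upto_imp_differentiable[OF 0(1)])
next
  case (Suc k)
  from Suc.prems have df: "\<And>x. f differentiable at x" and "differentiable_upto k (deriv f)"
    by (auto simp: differentiable_upto_Suc)
  moreover have "differentiable_upto k f" using Suc.prems differentiable_upto_mono by auto
  ultimately have "differentiable_upto k (\<lambda>x. (- 1) * (deriv f x * (inverse (f x) * inverse (f x))))"
    by (intro differentiable_upto_cmult differentiable_upto_mult Suc.IH Suc.prems(2))
  moreover have "deriv (\<lambda>x. inverse (f x)) = (\<lambda>x. (- 1) * (deriv f x * (inverse (f x) * inverse (f x))))"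
    using df Suc.prems(2)
    by (intro ext, subst deriv_inverse)
       (auto simp: real_differentiable_imp_field_differentiable power2_eq_square divide_inverse)
  ultimately show ?case
    using df Suc.prems(2) by (simp add: differentiable_upto_Suc)
qed

lemma DERIV_exp_compose:
  "(f :: real \<Rightarrow> real) differentiable at x \<Longrightarrow> DERIV (\<lambda>x. exp (f x)) x :> exp (f x) * deriv f x"
  by (rule DERIV_chain2[OF DERIV_exp]) (simp add: DERIV_deriv_iff_real_differentiable)

lemma differentiable_upto_exp: "differentiable_upto k f \<Longrightarrow> differentiable_upto k (\<lambda>x. exp (f x))"
proof (induction k)
  case 0
  have "(\<lambda>x. exp (f x)) differentiable at x" for x
    using DERIV_exp_compose[OF differentiable_upto_imp_differentiable[OF 0]]
    by (rule real_differentiable_def[THEN iffD2, OF exI])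
  then show ?case by (simp add: differentiable_upto_def)
next
  case (Suc k)
  from Suc.prems have df: "\<And>x. f differentiable at x" and "differentiable_upto k (deriv f)"
    by (auto simp: differentiable_upto_Suc)
  moreover have "differentiable_upto k f" using Suc.prems differentiable_upto_mono by auto
  ultimately have "differentiable_upto k (\<lambda>x. exp (f x) * deriv f x)"
    by (intro differentiable_upto_mult Suc.IH)
  moreover have "deriv (\<lambda>x. exp (f x)) = (\<lambda>x. exp (f x) * deriv f x)"
    using DERIV_exp_compose[OF df] DERIV_imp_deriv by blast
  ultimately show ?case
    using DERIV_exp_compose[OF df] real_differentiable_def by (auto simp: differentiable_upto_Suc)
qed

lemma smooth_fun_imp_differentiable: "smooth_fun f \<Longrightarrow> f differentiable at x"
  unfolding smooth_fun_iff_differentiable_upto using differentiable_upto_imp_differentiable by blast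

lemma smooth_fun_imp_DERIV: "smooth_fun f \<Longrightarrow> DERIV f x :> deriv f x"
  using smooth_fun_imp_differentiable DERIV_deriv_iff_real_differentiable by blast

lemma smooth_fun_deriv: "smooth_fun f \<Longrightarrow> smooth_fun (deriv f)"
  unfolding smooth_fun_iff_differentiable_upto using differentiable_upto_Suc by blast

lemma smooth_fun_add: "smooth_fun f \<Longrightarrow> smooth_fun g \<Longrightarrow> smooth_fun (\<lambda>x. f x + g x)"
  unfolding smooth_fun_iff_differentiable_upto using differentiable_upto_add by blast

lemma smooth_fun_mult: "smooth_fun f \<Longrightarrow> smooth_fun g \<Longrightarrow> smooth_fun (\<lambda>x. f x * g x)"
  unfolding smooth_fun_iff_differentiable_upto using differentiable_upto_mult by blast

lemma smooth_fun_cmult: "smooth_fun f \<Longrightarrow> smooth_fun (\<lambda>x. a * f x)"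
  unfolding smooth_fun_iff_differentiable_upto using differentiable_upto_cmult by blast

lemma smooth_fun_const: "smooth_fun (\<lambda>x. a)"
  unfolding smooth_fun_iff_differentiable_upto using differentiable_upto_const by blast

lemma smooth_fun_inverse: "smooth_fun f \<Longrightarrow> (\<And>x. f x \<noteq> 0) \<Longrightarrow> smooth_fun (\<lambda>x. inverse (f x))"
  unfolding smooth_fun_iff_differentiable_upto using differentiable_upto_inverse by blast

lemma smooth_fun_exp: "smooth_fun f \<Longrightarrow> smooth_fun (\<lambda>x. exp (f x))"
  unfolding smooth_fun_iff_differentiable_upto using differentiable_upto_exp by blast

lemma smooth_fun_diff: "smooth_fun f \<Longrightarrow> smooth_fun g \<Longrightarrow> smooth_fun (\<lambda>x. f x - g x)"
  using smooth_fun_add[OF _ smooth_fun_cmult[of g "- 1"]] by simp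

lemma smooth_fun_divide_const: "smooth_fun f \<Longrightarrow> smooth_fun (\<lambda>x. f x / a)"
  using smooth_fun_cmult[of f "1 / a"] by simp

lemma higher_deriv_divide_const:
  "smooth_fun f \<Longrightarrow> (deriv ^^ k) (\<lambda>x. f x / a) = (\<lambda>x. (deriv ^^ k) f x / a)"
  using higher_deriv_cmult[of k f k "1 / a"] by (simp add: smooth_fun_iff_differentiable_upto)

section \<open>Uniform exponential decay of families of functions\<close>

definition smooth_family :: "'p set \<Rightarrow> ('p \<Rightarrow> real \<Rightarrow> real) \<Rightarrow> bool" where
  "smooth_family P f \<longleftrightarrow> (\<forall>p\<in>P. smooth_fun (f p))"

definition uniform_decay :: "'p set \<Rightarrow> ('p \<Rightarrow> real \<Rightarrow> real) \<Rightarrow> real \<Rightarrow> nat \<Rightarrow> bool" where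
  "uniform_decay P f a k \<longleftrightarrow> (\<exists>C. \<forall>p\<in>P. \<forall>x\<ge>0. \<bar>(deriv ^^ k) (f p) x\<bar> \<le> C * exp (- a * x))"

definition uniform_decay_upto :: "'p set \<Rightarrow> ('p \<Rightarrow> real \<Rightarrow> real) \<Rightarrow> real \<Rightarrow> nat \<Rightarrow> bool" where
  "uniform_decay_upto P f a m \<longleftrightarrow> smooth_family P f \<and> (\<forall>j\<le>m. uniform_decay P f a j)"

lemma smooth_family_add: "smooth_family P f \<Longrightarrow> smooth_family P g \<Longrightarrow> smooth_family P (\<lambda>p x. f p x + g p x)"
  unfolding smooth_family_def using smooth_fun_add by blast

lemma smooth_family_mult: "smooth_family P f \<Longrightarrow> smooth_family P g \<Longrightarrow> smooth_family P (\<lambda>p x. f p x * g p x)"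
  unfolding smooth_family_def using smooth_fun_mult by blast

lemma smooth_family_cmult: "smooth_family P f \<Longrightarrow> smooth_family P (\<lambda>p x. s p * f p x)"
  unfolding smooth_family_def using smooth_fun_cmult by blast

lemma smooth_family_const: "smooth_family P (\<lambda>p x. s p)"
  unfolding smooth_family_def using smooth_fun_const by blast

lemma smooth_family_deriv: "smooth_family P f \<Longrightarrow> smooth_family P (\<lambda>p. deriv (f p))"
  unfolding smooth_family_def using smooth_fun_deriv by blast

lemma uniform_decay_cong:
  "(\<And>p x. p \<in> P \<Longrightarrow> f p x = g p x) \<Longrightarrow> uniform_decay P f a k = uniform_decay P g a k"
proof -
  assume "\<And>p x. p \<in> P \<Longrightarrow> f p x = g p x"
  then have "\<And>p. p \<in> P \<Longrightarrow> f p = g p" by blast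
  then show ?thesis unfolding uniform_decay_def by (metis (no_types, lifting))
qed

lemma uniform_decay_0I:
  "(\<And>p x. p \<in> P \<Longrightarrow> x \<ge> 0 \<Longrightarrow> \<bar>f p x\<bar> \<le> C * exp (- a * x)) \<Longrightarrow> uniform_decay P f a 0"
  unfolding uniform_decay_def by auto

lemma uniform_decay_deriv: "uniform_decay P (\<lambda>p. deriv (f p)) a k \<longleftrightarrow> uniform_decay P f a (Suc k)"
  unfolding uniform_decay_def by (simp add: funpow_Suc_right del: funpow.simps)

lemma uniform_decay_higher_deriv:
  "uniform_decay P (\<lambda>p. (deriv ^^ j) (f p)) a k \<longleftrightarrow> uniform_decay P f a (k + j)"
  unfolding uniform_decay_def by (simp add: funpow_add)

lemma uniform_decay_mono: "b \<le> a \<Longrightarrow> uniform_decay P f a k \<Longrightarrow> uniform_decay P f b k"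
proof -
  assume ba: "b \<le> a" and "uniform_decay P f a k"
  then obtain C where C: "\<forall>p\<in>P. \<forall>x\<ge>0. \<bar>(deriv ^^ k) (f p) x\<bar> \<le> C * exp (- a * x)"
    unfolding uniform_decay_def by blast
  show ?thesis unfolding uniform_decay_def
  proof (intro exI ballI allI impI)
    fix p x assume "p \<in> P" "(0::real) \<le> x"
    then have bound: "\<bar>(deriv ^^ k) (f p) x\<bar> \<le> C * exp (- a * x)" using C by blast
    then have "C \<ge> 0" by (smt (verit) exp_gt_zero zero_le_mult_iff)
    moreover have "exp (- a * x) \<le> exp (- b * x)" using ba \<open>0 \<le> x\<close> by (simp add: mult_right_mono)
    ultimately show "\<bar>(deriv ^^ k) (f p) x\<bar> \<le> C * exp (- b * x)"
      using bound by (meson mult_left_mono order_trans)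
  qed
qed

lemma uniform_decay_const: "(\<And>p. p \<in> P \<Longrightarrow> \<bar>s p\<bar> \<le> M) \<Longrightarrow> uniform_decay P (\<lambda>p x. s p) 0 k"
proof (cases "k = 0")
  case True
  assume "\<And>p. p \<in> P \<Longrightarrow> \<bar>s p\<bar> \<le> M"
  then show ?thesis using True unfolding uniform_decay_def by (intro exI[of _ M]) auto
next
  case False
  then show ?thesis unfolding uniform_decay_def by (intro exI[of _ 0]) (auto simp: higher_deriv_const)
qed

lemma uniform_decay_add:
  assumes "smooth_family P f" "smooth_family P g" "uniform_decay P f a k" "uniform_decay P g a k"
  shows "uniform_decay P (\<lambda>p x. f p x + g p x) a k"
proof -
  obtain C1 C2 where C1: "\<forall>p\<in>P. \<forall>x\<ge>0. \<bar>(deriv ^^ k) (f p) x\<bar> \<le> C1 * exp (- a * x)"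
    and C2: "\<forall>p\<in>P. \<forall>x\<ge>0. \<bar>(deriv ^^ k) (g p) x\<bar> \<le> C2 * exp (- a * x)"
    using assms(3,4) unfolding uniform_decay_def by blast
  show ?thesis unfolding uniform_decay_def
  proof (intro exI ballI allI impI)
    fix p x assume p: "p \<in> P" and x: "(0::real) \<le> x"
    have "(deriv ^^ k) (\<lambda>x. f p x + g p x) = (\<lambda>x. (deriv ^^ k) (f p) x + (deriv ^^ k) (g p) x)"
      using assms(1,2) p by (intro higher_deriv_add[of k])
        (auto simp: smooth_family_def smooth_fun_iff_differentiable_upto)
    then have "\<bar>(deriv ^^ k) (\<lambda>x. f p x + g p x) x\<bar> \<le> C1 * exp (- a * x) + C2 * exp (- a * x)"
      using C1 C2 p x by (smt (verit))
    then show "\<bar>(deriv ^^ k) (\<lambda>x. f p x + g p x) x\<bar> \<le> (C1 + C2) * exp (- a * x)"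
      by (simp add: distrib_right)
  qed
qed

lemma uniform_decay_cmult:
  assumes "smooth_family P f" "uniform_decay P f a k" "\<And>p. p \<in> P \<Longrightarrow> \<bar>s p\<bar> \<le> M"
  shows "uniform_decay P (\<lambda>p x. s p * f p x) a k"
proof -
  obtain C where C: "\<forall>p\<in>P. \<forall>x\<ge>0. \<bar>(deriv ^^ k) (f p) x\<bar> \<le> C * exp (- a * x)"
    using assms(2) unfolding uniform_decay_def by blast
  show ?thesis unfolding uniform_decay_def
  proof (intro exI ballI allI impI)
    fix p x assume p: "p \<in> P" and x: "(0::real) \<le> x"
    have "(deriv ^^ k) (\<lambda>x. s p * f p x) = (\<lambda>x. s p * (deriv ^^ k) (f p) x)"
      using assms(1) p by (intro higher_deriv_cmult[of k])
        (auto simp: smooth_family_def smooth_fun_iff_differentiable_upto)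
    then have "\<bar>(deriv ^^ k) (\<lambda>x. s p * f p x) x\<bar> = \<bar>s p\<bar> * \<bar>(deriv ^^ k) (f p) x\<bar>"
      by (simp add: abs_mult)
    also have "\<dots> \<le> M * (C * exp (- a * x))"
      using C p x assms(3)[OF p] by (intro mult_mono) auto
    finally show "\<bar>(deriv ^^ k) (\<lambda>x. s p * f p x) x\<bar> \<le> (M * C) * exp (- a * x)"
      by simp
  qed
qed

lemma uniform_decay_mult:
  "smooth_family P f \<Longrightarrow> smooth_family P g \<Longrightarrow> (\<forall>j\<le>k. uniform_decay P f a j) \<Longrightarrow>
   (\<forall>j\<le>k. uniform_decay P g b j) \<Longrightarrow> uniform_decay P (\<lambda>p x. f p x * g p x) (a + b) k"
proof (induction k arbitrary: f g)
  case 0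
  then obtain C1 C2 where C1: "\<forall>p\<in>P. \<forall>x\<ge>0. \<bar>f p x\<bar> \<le> C1 * exp (- a * x)"
    and C2: "\<forall>p\<in>P. \<forall>x\<ge>0. \<bar>g p x\<bar> \<le> C2 * exp (- b * x)" unfolding uniform_decay_def by auto
  show ?case
  proof (rule uniform_decay_0I)
    fix p x assume p: "p \<in> P" and x: "(0::real) \<le> x"
    have "\<bar>f p x * g p x\<bar> \<le> (C1 * exp (- a * x)) * (C2 * exp (- b * x))"
      unfolding abs_mult using C1 C2 p x by (meson abs_ge_zero mult_mono order_trans)
    also have "\<dots> = (C1 * C2) * exp (- (a + b) * x)"
      by (simp add: algebra_simps flip: exp_add)
    finally show "\<bar>f p x * g p x\<bar> \<le> (C1 * C2) * exp (- (a + b) * x)" .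
  qed
next
  case (Suc k)
  have "deriv (\<lambda>x. f p x * g p x) = (\<lambda>x. f p x * deriv (g p) x + deriv (f p) x * g p x)"
    if "p \<in> P" for p
    using Suc.prems(1,2) that
    by (intro deriv_mult_fun smooth_fun_imp_differentiable) (auto simp: smooth_family_def)
  moreover have "uniform_decay P (\<lambda>p x. f p x * deriv (g p) x + deriv (f p) x * g p x) (a + b) k"
    using Suc.prems
    by (intro uniform_decay_add smooth_family_mult smooth_family_deriv Suc.IH allI impI)
      (simp_all add: uniform_decay_deriv)
  ultimately have "uniform_decay P (\<lambda>p. deriv (\<lambda>x. f p x * g p x)) (a + b) k"
    by (subst uniform_decay_cong) auto
  then show ?case by (simp add: uniform_decay_deriv)
qed

lemma uniform_decay_uptoD: "uniform_decay_upto P f a m \<Longrightarrow> j \<le> m \<Longrightarrow> uniform_decay P f a j"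
  unfolding uniform_decay_upto_def by blast

lemma uniform_decay_upto_Suc:
  "uniform_decay_upto P f a (Suc m) \<longleftrightarrow> uniform_decay_upto P f a m \<and> uniform_decay P f a (Suc m)"
  unfolding uniform_decay_upto_def using le_Suc_eq by auto

lemma uniform_decay_upto_0:
  "uniform_decay_upto P f a 0 \<longleftrightarrow> smooth_family P f \<and> uniform_decay P f a 0"
  unfolding uniform_decay_upto_def by auto

lemma uniform_decay_upto_add:
  "uniform_decay_upto P f a m \<Longrightarrow> uniform_decay_upto P g a m \<Longrightarrow>
   uniform_decay_upto P (\<lambda>p x. f p x + g p x) a m"
  unfolding uniform_decay_upto_def using uniform_decay_add smooth_family_add by blast

lemma uniform_decay_upto_mult:
  assumes "uniform_decay_upto P f a m" "uniform_decay_upto P g b m" "c \<le> a + b"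
  shows "uniform_decay_upto P (\<lambda>p x. f p x * g p x) c m"
  unfolding uniform_decay_upto_def
proof (intro conjI allI impI)
  show "smooth_family P (\<lambda>p x. f p x * g p x)"
    using assms(1,2) smooth_family_mult unfolding uniform_decay_upto_def by blast
  fix j assume "j \<le> m"
  then have "uniform_decay P (\<lambda>p x. f p x * g p x) (a + b) j"
    using assms(1,2) by (intro uniform_decay_mult) (auto simp: uniform_decay_upto_def)
  then show "uniform_decay P (\<lambda>p x. f p x * g p x) c j"
    by (rule uniform_decay_mono[OF assms(3)])
qed

lemma uniform_decay_upto_cmult:
  "uniform_decay_upto P f a m \<Longrightarrow> (\<And>p. p \<in> P \<Longrightarrow> \<bar>s p\<bar> \<le> M) \<Longrightarrow>
   uniform_decay_upto P (\<lambda>p x. s p * f p x) a m"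
  unfolding uniform_decay_upto_def using uniform_decay_cmult smooth_family_cmult by blast

lemma uniform_decay_upto_const:
  "(\<And>p. p \<in> P \<Longrightarrow> \<bar>s p\<bar> \<le> M) \<Longrightarrow> uniform_decay_upto P (\<lambda>p x. s p) 0 m"
  unfolding uniform_decay_upto_def using uniform_decay_const smooth_family_const by blast

lemma uniform_decay_upto_mono: "b \<le> a \<Longrightarrow> uniform_decay_upto P f a m \<Longrightarrow> uniform_decay_upto P f b m"
  unfolding uniform_decay_upto_def using uniform_decay_mono by blast

lemma uniform_decay_upto_deriv:
  "uniform_decay_upto P f a (Suc m) \<Longrightarrow> uniform_decay_upto P (\<lambda>p. deriv (f p)) a m"
  unfolding uniform_decay_upto_def uniform_decay_deriv using smooth_family_deriv by auto

lemma uniform_decay_upto_le: "uniform_decay_upto P f a m \<Longrightarrow> j \<le> m \<Longrightarrow> uniform_decay_upto P f a j"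
  unfolding uniform_decay_upto_def by auto

lemma uniform_decay_upto_cong:
  assumes "\<And>p x. p \<in> P \<Longrightarrow> f p x = g p x"
  shows "uniform_decay_upto P f a m = uniform_decay_upto P g a m"
proof -
  have "\<And>p. p \<in> P \<Longrightarrow> f p = g p" using assms by blast
  moreover have "uniform_decay P f a j = uniform_decay P g a j" for j using assms by (rule uniform_decay_cong)
  ultimately show ?thesis unfolding uniform_decay_upto_def smooth_family_def by simp
qed

lemma uniform_decay_all_orders:
  assumes "\<And>k. uniform_decay P f a k"
  obtains C where "\<And>k. C k > 0"
    and "\<And>k p x. p \<in> P \<Longrightarrow> x \<ge> 0 \<Longrightarrow> \<bar>(deriv ^^ k) (f p) x\<bar> \<le> C k * exp (- a * x)"
proof -
  obtain C where C: "\<And>k. \<forall>p\<in>P. \<forall>x\<ge>0. \<bar>(deriv ^^ k) (f p) x\<bar> \<le> C k * exp (- a * x)"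
    using assms unfolding uniform_decay_def by metis
  show thesis
  proof (rule that[of "\<lambda>k. \<bar>C k\<bar> + 1"])
    fix k p and x :: real assume "p \<in> P" "x \<ge> 0"
    then have "\<bar>(deriv ^^ k) (f p) x\<bar> \<le> C k * exp (- a * x)" using C by blast
    also have "\<dots> \<le> (\<bar>C k\<bar> + 1) * exp (- a * x)" by (intro mult_right_mono) auto
    finally show "\<bar>(deriv ^^ k) (f p) x\<bar> \<le> (\<bar>C k\<bar> + 1) * exp (- a * x)" .
  qed simp
qed

lemma uniform_decay_sum_all_orders:
  assumes "\<And>k. uniform_decay P f a k" and "\<And>k. uniform_decay P g a k"
  obtains C where "\<And>k. C k > 0"
    and "\<And>k p x. p \<in> P \<Longrightarrow> x \<ge> 0 \<Longrightarrow>
      \<bar>(deriv ^^ k) (f p) x\<bar> + \<bar>(deriv ^^ k) (g p) x\<bar> \<le> C k * exp (- a * x)"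
proof -
  obtain Cf where Cf: "\<And>k. Cf k > 0"
    "\<And>k p x. p \<in> P \<Longrightarrow> x \<ge> 0 \<Longrightarrow> \<bar>(deriv ^^ k) (f p) x\<bar> \<le> Cf k * exp (- a * x)"
    using uniform_decay_all_orders[OF assms(1)] by blast
  obtain Cg where Cg: "\<And>k. Cg k > 0"
    "\<And>k p x. p \<in> P \<Longrightarrow> x \<ge> 0 \<Longrightarrow> \<bar>(deriv ^^ k) (g p) x\<bar> \<le> Cg k * exp (- a * x)"
    using uniform_decay_all_orders[OF assms(2)] by blast
  show thesis
  proof (rule that[of "\<lambda>k. Cf k + Cg k"])
    show "Cf k + Cg k > 0" for k using Cf(1) Cg(1) by (simp add: add_pos_pos)
    fix k p and x :: real assume "p \<in> P" "x \<ge> 0"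
    then show "\<bar>(deriv ^^ k) (f p) x\<bar> + \<bar>(deriv ^^ k) (g p) x\<bar> \<le> (Cf k + Cg k) * exp (- a * x)"
      using Cf(2) Cg(2) by (simp add: distrib_right add_mono)
  qed
qed

lemma DERIV_zero_imp_eq_limit:
  fixes G :: "real \<Rightarrow> real"
  assumes "\<And>x. DERIV G x :> 0" and "(G \<longlongrightarrow> L) at_top"
  shows "G x = L"
proof -
  have "G = (\<lambda>_. G x)" using assms(1) DERIV_isconst_all by blast
  then have "((\<lambda>_::real. G x) \<longlongrightarrow> L) at_top" using assms(2) by simp
  then show ?thesis by (simp add: tendsto_const_iff)
qed

lemma strict_antimono_on_gt_limit:
  fixes f :: "real \<Rightarrow> real"
  assumes anti: "strict_antimono_on {0<..} f" and lim: "(f \<longlongrightarrow> L) at_top" and x: "x > 0"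
  shows "f x > L"
proof -
  have less: "f b < f a" if "0 < a" "a < b" for a b
    using anti that unfolding monotone_on_def by simp
  have "eventually (\<lambda>y. f y \<le> f (x + 1)) at_top"
    unfolding eventually_at_top_linorder
  proof (intro exI allI impI)
    fix y assume "x + 1 \<le> y"
    then show "f y \<le> f (x + 1)" using less[of "x + 1" y] x by (cases "y = x + 1") auto
  qed
  then have "L \<le> f (x + 1)" using tendsto_upperbound[OF lim] by simp
  moreover have "f (x + 1) < f x" using less x by simp
  ultimately show ?thesis by simp
qed

lemma strict_antimono_on_DERIV_nonpos:
  fixes f :: "real \<Rightarrow> real"
  assumes anti: "strict_antimono_on {0<..} f" and "DERIV f x :> D" and x: "x > 0"
  shows "D \<le> 0"
proof (rule ccontr)
  assume "\<not> D \<le> 0"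
  then obtain d where d: "d > 0" and "\<forall>h>0. h < d \<longrightarrow> f x < f (x + h)"
    using DERIV_pos_inc_right[OF \<open>DERIV f x :> D\<close>] by (meson not_le)
  then have "f x < f (x + d / 2)" by simp
  moreover have "x \<in> {0<..}" "x + d / 2 \<in> {0<..}" using x d by auto
  then have "f (x + d / 2) < f x" using anti d unfolding monotone_on_def by simp
  ultimately show False by simp
qed

lemma even_fun_DERIV_0:
  fixes f :: "real \<Rightarrow> real"
  assumes even: "\<And>x. f (- x) = f x" and d: "DERIV f 0 :> D"
  shows "D = 0"
proof -
  have "DERIV f (- 0) :> D" using d by simp
  then have "DERIV (\<lambda>x. f (- x)) 0 :> D * (- 1)"
    by (rule DERIV_chain2[OF _ DERIV_minus[OF DERIV_ident]])
  moreover have "(\<lambda>x. f (- x)) = f" using even by (rule ext)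
  ultimately have "D = D * (- 1)" using DERIV_unique[OF d] by metis
  then show ?thesis by linarith
qed

lemma even_ge_from_right:
  fixes f :: "real \<Rightarrow> real"
  assumes "\<And>x. f (- x) = f x" "\<And>x. x > 0 \<Longrightarrow> f x > c" "isCont f 0"
  shows "f x \<ge> c"
proof -
  have "(f \<longlongrightarrow> f 0) (at_right 0)" using assms(3) filterlim_at_split isCont_def by blast
  moreover have "eventually (\<lambda>y. c \<le> f y) (at_right (0::real))"
    using eventually_at_right_less[of "0::real"] by (rule eventually_mono) (use assms(2) in force)
  ultimately have "f 0 \<ge> c" by (rule tendsto_lowerbound) simp
  then show ?thesis using assms(1)[of x] assms(2)[of x] assms(2)[of "- x"]
    by (cases "x > 0"; cases "x < 0") auto
qed

text \<open>If \<open>L > 0\<close>, then \<open>f\<close> eventually decreases at a fixed positive rate, contradicting \<open>f \<ge> 0\<close>.\<close>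

lemma tendsto_deriv_sq_eq_0:
  fixes f f' :: "real \<Rightarrow> real"
  assumes D: "\<And>x. DERIV f x :> f' x" and nonpos: "\<And>x. x > 0 \<Longrightarrow> f' x \<le> 0"
    and nonneg: "\<And>x. f x \<ge> 0" and lim: "((\<lambda>x. (f' x)\<^sup>2) \<longlongrightarrow> L) at_top"
  shows "L = 0"
proof (rule ccontr)
  assume "L \<noteq> 0"
  moreover have "L \<ge> 0" by (rule tendsto_lowerbound[OF lim]) (auto intro: always_eventually)
  ultimately have L: "L > 0" by simp
  define m where "m = sqrt (L / 2)"
  have m: "m > 0" "m\<^sup>2 = L / 2" unfolding m_def using L by auto
  have "eventually (\<lambda>y. L / 2 < (f' y)\<^sup>2) at_top"
    using order_tendstoD(1)[OF lim, of "L / 2"] L by linarith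
  then have "eventually (\<lambda>y. L / 2 < (f' y)\<^sup>2 \<and> 0 < y) at_top"
    by (rule eventually_conj[OF _ eventually_gt_at_top])
  then obtain X where X: "\<And>y. y \<ge> X \<Longrightarrow> L / 2 < (f' y)\<^sup>2 \<and> 0 < y"
    unfolding eventually_at_top_linorder by blast
  have steep: "f' y \<le> - m" if "y \<ge> X" for y
  proof -
    have "m\<^sup>2 < (f' y)\<^sup>2" "f' y \<le> 0" using X[OF that] nonpos m by auto
    then have "m < \<bar>f' y\<bar>" using m(1) by (simp add: power2_less_imp_less)
    then show ?thesis using \<open>f' y \<le> 0\<close> by simp
  qed
  define Y where "Y = X + (f X + 1) / m"
  have XY: "X < Y" unfolding Y_def using m nonneg[of X] by simp
  obtain z where z: "X < z" "z < Y" "f Y - f X = (Y - X) * f' z"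
    using MVT2[OF XY, of f f'] D by blast
  have "(Y - X) * f' z \<le> (Y - X) * (- m)"
    using steep[of z] z XY by (intro mult_left_mono) auto
  also have "\<dots> = - (f X + 1)" unfolding Y_def using m by simp
  finally show False using z nonneg[of Y] by simp
qed

lemma MVT_abs_le_linear:
  fixes F F' :: "real \<Rightarrow> real"
  assumes s: "s \<ge> 0" and F0: "F 0 = 0"
    and D: "\<And>t. 0 \<le> t \<Longrightarrow> t \<le> s \<Longrightarrow> DERIV F t :> F' t"
    and bound: "\<And>t. 0 \<le> t \<Longrightarrow> t \<le> s \<Longrightarrow> \<bar>F' t\<bar> \<le> K"
  shows "\<bar>F s\<bar> \<le> K * s"
proof (cases "s = 0")
  case False
  then have "0 < s" using s by simp
  then obtain z where z: "0 < z" "z < s" "F s - F 0 = (s - 0) * F' z"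
    using MVT2[of 0 s F F'] D by blast
  then have "\<bar>F s\<bar> = s * \<bar>F' z\<bar>" using F0 \<open>0 < s\<close> by (simp add: abs_mult)
  also have "\<dots> \<le> s * K" using bound[of z] z \<open>0 < s\<close> by (intro mult_left_mono) auto
  finally show ?thesis by (simp add: mult.commute)
qed (use F0 in simp)

lemma MVT_abs_le_quadratic:
  fixes F F' :: "real \<Rightarrow> real"
  assumes s: "s \<ge> 0" and F0: "F 0 = 0"
    and D: "\<And>t. 0 \<le> t \<Longrightarrow> t \<le> s \<Longrightarrow> DERIV F t :> F' t"
    and bound: "\<And>t. 0 \<le> t \<Longrightarrow> t \<le> s \<Longrightarrow> \<bar>F' t\<bar> \<le> K * t"
  shows "\<bar>F s\<bar> \<le> K * s\<^sup>2"
proof (cases "s = 0")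
  case False
  then have "0 < s" using s by simp
  then obtain z where z: "0 < z" "z < s" "F s - F 0 = (s - 0) * F' z"
    using MVT2[of 0 s F F'] D by blast
  have K: "K \<ge> 0" using bound[of z] z by (smt (verit) zero_le_mult_iff)
  have "\<bar>F s\<bar> = s * \<bar>F' z\<bar>" using F0 z \<open>0 < s\<close> by (simp add: abs_mult)
  also have "\<dots> \<le> s * (K * z)" using bound[of z] z \<open>0 < s\<close> by (intro mult_left_mono) auto
  also have "\<dots> \<le> s * (K * s)" using K z \<open>0 < s\<close> by (intro mult_left_mono) auto
  finally show ?thesis by (simp add: power2_eq_square algebra_simps)
qed (use F0 in simp)

lemma abs_exp_minus_one_minus_le: "\<bar>x\<bar> \<le> 1 \<Longrightarrow> \<bar>exp x - 1 - x\<bar> \<le> 2 * (x::real)\<^sup>2"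
proof -
  assume x: "\<bar>x\<bar> \<le> 1"
  obtain t where t: "\<bar>t\<bar> \<le> \<bar>x\<bar>" "exp x = (\<Sum>m<2. x ^ m / fact m) + exp t / fact 2 * x ^ 2"
    using Maclaurin_exp_le[of x 2] by blast
  have "exp t \<le> exp 1" using t(1) x by simp
  also have "exp 1 \<le> (3::real)" using exp_le by simp
  finally have "exp t / 2 * x\<^sup>2 \<le> 2 * x\<^sup>2" by (intro mult_right_mono) auto
  moreover have "exp x - 1 - x = exp t / 2 * x\<^sup>2" using t(2) by (simp add: numeral_2_eq_2)
  moreover have "exp t / 2 * x\<^sup>2 \<ge> 0" by simp
  ultimately show ?thesis by (simp only: abs_of_nonneg)
qed

lemma abs_exp_minus_one_le: "\<bar>x\<bar> \<le> 1 \<Longrightarrow> \<bar>exp x - 1\<bar> \<le> 3 * \<bar>x::real\<bar>"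
proof -
  assume x: "\<bar>x\<bar> \<le> 1"
  have "x\<^sup>2 \<le> \<bar>x\<bar>" using x by (metis abs_ge_zero abs_mult_self_eq mult_left_le_one_le power2_eq_square)
  then show ?thesis using abs_exp_minus_one_minus_le[OF x] by (simp add: abs_le_iff) linarith
qed

lemma divide_le_self: "0 \<le> x \<Longrightarrow> 1 \<le> y \<Longrightarrow> x / y \<le> (x::real)"
proof -
  assume x: "0 \<le> x" and y: "1 \<le> y"
  have "x * 1 \<le> x * y" using x y by (intro mult_left_mono)
  then show ?thesis using y by (simp add: divide_le_eq)
qed

lemma le_sqrt_of_quadratic_margin:
  fixes a s t \<tau> m r Q :: real
  assumes a: "a > 0" and s: "s \<ge> 0" and t: "t \<ge> 0" and \<tau>: "0 \<le> \<tau>" "\<tau> \<le> 3 * a / 100"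
    and m: "0 \<le> m" "m \<le> a\<^sup>2 / 20"
    and r: "r \<le> s * (a / 3 - t + \<tau>)" and Q: "Q \<ge> s\<^sup>2 * (a\<^sup>2 - 2 * a * t - m)" and "Q \<ge> 0"
  shows "r \<le> sqrt Q"
proof (cases "r \<le> 0")
  case True then show ?thesis using \<open>Q \<ge> 0\<close> by (meson order_trans real_sqrt_ge_zero)
next
  case False
  define \<rho> where "\<rho> = a / 3 - t + \<tau>"
  have "0 < s * \<rho>" using False r \<rho>_def by simp
  then have "\<rho> > 0" using s by (auto simp: zero_less_mult_iff)
  then have t_le: "t < 109 * a / 300" and "\<rho> \<le> 109 * a / 300" using t \<tau> unfolding \<rho>_def by auto
  then have "\<rho>\<^sup>2 \<le> (109 * a / 300)\<^sup>2" using \<open>\<rho> > 0\<close> by (intro power_mono) auto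
  moreover have "2 * a * t \<le> 2 * a * (109 * a / 300)" using t_le a by (intro mult_left_mono) auto
  then have "a\<^sup>2 - 2 * a * t - m \<ge> a\<^sup>2 - 2 * a * (109 * a / 300) - a\<^sup>2 / 20" using m by simp
  moreover have "a\<^sup>2 - 2 * a * (109 * a / 300) - a\<^sup>2 / 20 \<ge> (109 * a / 300)\<^sup>2"
    by (simp add: power2_eq_square field_simps)
  ultimately have "\<rho>\<^sup>2 \<le> a\<^sup>2 - 2 * a * t - m" by simp
  then have "s\<^sup>2 * \<rho>\<^sup>2 \<le> s\<^sup>2 * (a\<^sup>2 - 2 * a * t - m)" by (intro mult_left_mono) auto
  then have "(s * \<rho>)\<^sup>2 \<le> Q" using Q by (simp add: power_mult_distrib)
  then have "s * \<rho> \<le> sqrt Q" by (rule real_le_rsqrt)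
  then show ?thesis using r \<rho>_def by simp
qed

lemma one_plus_cube_minus_one_le:
  fixes t T :: real
  assumes "0 \<le> t" "t \<le> T"
  shows "(1 + t) ^ 3 - 1 \<le> 3 * t * (1 + T)\<^sup>2"
proof -
  have "(1 + t)\<^sup>2 \<le> (1 + T)\<^sup>2" "1 \<le> (1 + T)\<^sup>2" using assms by (auto intro: power_mono one_le_power)
  moreover have "1 + t \<le> (1 + T)\<^sup>2"
    using assms \<open>1 \<le> (1 + T)\<^sup>2\<close> by (smt (verit) power2_eq_square mult_le_cancel_left1)
  ultimately have "(1 + t)\<^sup>2 + (1 + t) + 1 \<le> 3 * (1 + T)\<^sup>2" by simp
  then have "t * ((1 + t)\<^sup>2 + (1 + t) + 1) \<le> t * (3 * (1 + T)\<^sup>2)" using assms(1) by (rule mult_left_mono)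
  moreover have "(1 + t) ^ 3 - 1 = t * ((1 + t)\<^sup>2 + (1 + t) + 1)"
    by (simp add: power2_eq_square power3_eq_cube algebra_simps)
  ultimately show ?thesis by simp
qed

section \<open>The potential as a function of the density\<close>

definition Phi :: "real \<Rightarrow> real \<Rightarrow> real \<Rightarrow> real" where
  "Phi c s y = c\<^sup>2 / 2 * (1 - 1 / y\<^sup>2) - s * ln y"

definition dPhi :: "real \<Rightarrow> real \<Rightarrow> real \<Rightarrow> real" where
  "dPhi c s y = c\<^sup>2 / y ^ 3 - s / y"

definition sagdeev :: "real \<Rightarrow> real \<Rightarrow> real \<Rightarrow> real" where
  "sagdeev c s y = exp (Phi c s y) - 1 + c\<^sup>2 * (1 / y - 1) + s * (y - 1)"

lemma DERIV_Phi: "y > 0 \<Longrightarrow> DERIV (Phi c s) y :> dPhi c s y"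
  unfolding Phi_def dPhi_def
  by (auto intro!: derivative_eq_intros simp: field_simps power2_eq_square power3_eq_cube)

lemma Phi_1 [simp]: "Phi c s 1 = 0"
  unfolding Phi_def by simp

lemma sagdeev_1 [simp]: "sagdeev c s 1 = 0"
  unfolding sagdeev_def by simp

section \<open>Parameters and the rescaled potential\<close>

locale wave_params =
  fixes \<sigma> \<gamma> :: real
  assumes sigma_nonneg: "\<sigma> \<ge> 0" and gamma_pos: "\<gamma> > 0"
begin

definition V :: real where "V = sqrt (1 + \<sigma>)"

lemma V_sq: "V\<^sup>2 = 1 + \<sigma>"
  unfolding V_def using sigma_nonneg by simp

lemma V_ge_1: "V \<ge> 1"
  unfolding V_def using sigma_nonneg by simp

definition speed :: "real \<Rightarrow> real" where "speed e = V + \<gamma> * e"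

lemma speed_bounds: "0 \<le> e \<Longrightarrow> e \<le> 1 \<Longrightarrow> 0 \<le> speed e \<and> speed e \<le> V + \<gamma>"
  unfolding speed_def using V_ge_1 gamma_pos by (auto intro: mult_left_le)

text \<open>\<open>S\<close> is twice the amplitude \<open>3\<gamma>/V\<close> of the limiting KdV soliton; it will bound the
  rescaled density \<open>(n - 1)/\<epsilon>\<close>.\<close>

definition S :: real where "S = 6 * \<gamma> / V"

lemma S_pos: "S > 0"
  unfolding S_def using V_ge_1 gamma_pos by simp

text \<open>For a solution with \<open>Nt = (n - 1)/\<epsilon>\<close> and \<open>\<psi> = \<phi>/\<epsilon>\<close>, these functions of \<open>s = Nt\<close>
  express \<open>\<psi>\<close>, \<open>d\<psi>/dNt\<close>, \<open>\<psi>''\<close> and \<open>\<psi>'\<^sup>2/2\<close>. As \<open>e \<rightarrow> 0\<close> they tend to \<open>s\<close>, \<open>1\<close>,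
  \<open>psi2_kdv s\<close> and \<open>energy_kdv s\<close>, the profile equations of the KdV soliton.\<close>

definition psi_w :: "real \<Rightarrow> real \<Rightarrow> real" where
  "psi_w e s = Phi (speed e) \<sigma> (1 + e * s) / e"

definition dpsi_w :: "real \<Rightarrow> real \<Rightarrow> real" where
  "dpsi_w e s = dPhi (speed e) \<sigma> (1 + e * s)"

definition psi2_w :: "real \<Rightarrow> real \<Rightarrow> real" where
  "psi2_w e s = (exp (Phi (speed e) \<sigma> (1 + e * s)) - (1 + e * s)) / e\<^sup>2"

definition energy_w :: "real \<Rightarrow> real \<Rightarrow> real" where
  "energy_w e s = sagdeev (speed e) \<sigma> (1 + e * s) / e ^ 3"

definition psi2_kdv :: "real \<Rightarrow> real" where
  "psi2_kdv s = 2 * V * \<gamma> * s - V\<^sup>2 * s\<^sup>2"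

definition energy_kdv :: "real \<Rightarrow> real" where
  "energy_kdv s = V * \<gamma> * s\<^sup>2 - V\<^sup>2 * s ^ 3 / 3"

definition dpsi_w_numer :: "real \<Rightarrow> real \<Rightarrow> real" where
  "dpsi_w_numer e s = 2 * V * \<gamma> + \<gamma>\<^sup>2 * e - V\<^sup>2 * s * (2 + e * s) - (1 + e * s)\<^sup>2 * s"

definition A_dpsi :: real where
  "A_dpsi = 2 * V * \<gamma> + \<gamma>\<^sup>2 + V\<^sup>2 * S * (2 + S) + (1 + S)\<^sup>2 * S"

lemma A_dpsi_pos: "A_dpsi > 0"
  unfolding A_dpsi_def using V_ge_1 gamma_pos S_pos by (simp add: add_pos_nonneg)

lemma dpsi_w_minus_one:
  assumes "e > 0" "s \<ge> 0"
  shows "dpsi_w e s - 1 = e * dpsi_w_numer e s / (1 + e * s) ^ 3"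
proof -
  define N where "N = 1 + e * s"
  have "N > 0" unfolding N_def using assms by (simp add: add_pos_nonneg)
  then have "N \<noteq> 0" by simp
  then have "dpsi_w e s - 1 = ((speed e)\<^sup>2 - (V\<^sup>2 - 1) * N\<^sup>2 - N ^ 3) / N ^ 3"
    unfolding dpsi_w_def dPhi_def N_def[symmetric] V_sq
    by (simp add: field_simps power2_eq_square power3_eq_cube)
  also have "(speed e)\<^sup>2 - (V\<^sup>2 - 1) * N\<^sup>2 - N ^ 3 = e * dpsi_w_numer e s"
    unfolding speed_def N_def dpsi_w_numer_def by (simp add: power2_eq_square power3_eq_cube algebra_simps)
  finally show ?thesis unfolding N_def .
qed

lemma dpsi_w_numer_bound:
  assumes e: "0 < e" "e \<le> 1" and s: "0 \<le> s" "s \<le> S"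
  shows "\<bar>dpsi_w_numer e s\<bar> \<le> A_dpsi"
proof -
  have es: "0 \<le> e * s" "e * s \<le> S" using e s by (auto intro: order_trans[OF mult_left_le_one_le])
  have "0 \<le> 2 * V * \<gamma> + \<gamma>\<^sup>2 * e" "2 * V * \<gamma> + \<gamma>\<^sup>2 * e \<le> 2 * V * \<gamma> + \<gamma>\<^sup>2"
    using e V_ge_1 gamma_pos by (auto intro: mult_left_le)
  moreover have "0 \<le> V\<^sup>2 * s * (2 + e * s)" "V\<^sup>2 * s * (2 + e * s) \<le> V\<^sup>2 * S * (2 + S)"
    using es s by (auto intro!: mult_mono)
  moreover have "0 \<le> (1 + e * s)\<^sup>2 * s" "(1 + e * s)\<^sup>2 * s \<le> (1 + S)\<^sup>2 * S"
    using es s by (auto intro!: mult_mono power_mono)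
  ultimately show ?thesis unfolding dpsi_w_numer_def A_dpsi_def by linarith
qed

lemma dpsi_w_approx:
  assumes e: "0 < e" "e \<le> 1" and s: "0 \<le> s" "s \<le> S"
  shows "\<bar>dpsi_w e s - 1\<bar> \<le> A_dpsi * e"
proof -
  have N: "(1 + e * s) ^ 3 \<ge> 1" using e s by simp
  have "\<bar>dpsi_w e s - 1\<bar> = e * \<bar>dpsi_w_numer e s\<bar> / (1 + e * s) ^ 3"
    using dpsi_w_minus_one[of e s] e s N by (simp add: abs_mult)
  also have "\<dots> \<le> e * \<bar>dpsi_w_numer e s\<bar>" using N e by (intro divide_le_self) auto
  also have "\<dots> \<le> e * A_dpsi" using dpsi_w_numer_bound[OF e s] e by (simp add: mult_left_mono)
  finally show ?thesis by (simp add: mult.commute)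
qed

lemma DERIV_Phi_w:
  "1 + e * s > 0 \<Longrightarrow> DERIV (\<lambda>s. Phi (speed e) \<sigma> (1 + e * s)) s :> dpsi_w e s * e"
  unfolding dpsi_w_def by (rule DERIV_chain2[OF DERIV_Phi]) (auto intro!: derivative_eq_intros)

lemma DERIV_psi_w: "1 + e * s > 0 \<Longrightarrow> e \<noteq> 0 \<Longrightarrow> DERIV (psi_w e) s :> dpsi_w e s"
  unfolding psi_w_def[abs_def] using DERIV_cdivide[OF DERIV_Phi_w, of e s e] by simp

lemma psi_w_approx:
  assumes e: "0 < e" "e \<le> 1" and s: "0 \<le> s" "s \<le> S"
  shows "\<bar>psi_w e s - s\<bar> \<le> A_dpsi * e * s"
proof (rule MVT_abs_le_linear[of s "\<lambda>s. psi_w e s - s" "\<lambda>t. dpsi_w e t - 1"])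
  fix t assume t: "0 \<le> t" "t \<le> s"
  have "1 + e * t > 0" using e t by (simp add: add_pos_nonneg)
  then show "DERIV (\<lambda>s. psi_w e s - s) t :> dpsi_w e t - 1"
    using e by (intro DERIV_diff DERIV_psi_w DERIV_ident) auto
  show "\<bar>dpsi_w e t - 1\<bar> \<le> A_dpsi * e" using dpsi_w_approx[of e t] e t s by simp
qed (use s in \<open>auto simp: psi_w_def\<close>)

lemma DERIV_psi2_w:
  assumes "1 + e * s > 0" "e \<noteq> 0"
  shows "DERIV (psi2_w e) s :> (exp (Phi (speed e) \<sigma> (1 + e * s)) * dpsi_w e s - 1) / e"
proof -
  have "DERIV (\<lambda>s. 1 + e * s) s :> e" by (auto intro!: derivative_eq_intros)
  then have "DERIV (psi2_w e) s :> (exp (Phi (speed e) \<sigma> (1 + e * s)) * (dpsi_w e s * e) - e) / e\<^sup>2"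
    unfolding psi2_w_def[abs_def]
    by (intro DERIV_cdivide DERIV_diff DERIV_chain2[OF DERIV_exp DERIV_Phi_w[OF assms(1)]])
  moreover have "(exp (Phi (speed e) \<sigma> (1 + e * s)) * (dpsi_w e s * e) - e) / e\<^sup>2
      = (exp (Phi (speed e) \<sigma> (1 + e * s)) * dpsi_w e s - 1) / e"
    using assms(2) by (simp add: power2_eq_square field_simps)
  ultimately show ?thesis by simp
qed

definition B_psi :: real where "B_psi = (1 + A_dpsi) * S"

lemma B_psi_pos: "B_psi > 0"
  unfolding B_psi_def using A_dpsi_pos S_pos by simp

lemma psi_w_bound:
  assumes e: "0 < e" "e \<le> 1" and s: "0 \<le> s" "s \<le> S"
  shows "\<bar>psi_w e s\<bar> \<le> B_psi"
proof -
  have "A_dpsi * e * s \<le> A_dpsi * 1 * S" using A_dpsi_pos e s by (intro mult_mono) auto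
  then show ?thesis using psi_w_approx[OF e s] s unfolding B_psi_def by (simp add: algebra_simps)
qed

lemma dpsi_w_bound:
  assumes e: "0 < e" "e \<le> 1" and s: "0 \<le> s" "s \<le> S"
  shows "\<bar>dpsi_w e s\<bar> \<le> 1 + A_dpsi"
proof -
  have "A_dpsi * e \<le> A_dpsi" using A_dpsi_pos e by (simp add: mult_left_le)
  then show ?thesis using dpsi_w_approx[OF e s] by linarith
qed

lemma exp_Phi_w_approx:
  assumes e: "0 < e" "e \<le> 1" and eB: "e * B_psi \<le> 1" and s: "0 \<le> s" "s \<le> S"
  shows "\<bar>(exp (Phi (speed e) \<sigma> (1 + e * s)) - 1) / e - s\<bar> \<le> e * (2 * B_psi\<^sup>2 + A_dpsi * S)"
proof -
  define p where "p = psi_w e s"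
  define H where "H = Phi (speed e) \<sigma> (1 + e * s)"
  have Hp: "H = e * p" unfolding H_def p_def psi_w_def using e by simp
  have pB: "\<bar>p\<bar> \<le> B_psi" unfolding p_def using psi_w_bound[OF e s] .
  then have "\<bar>H\<bar> \<le> e * B_psi" unfolding Hp using e by (simp add: abs_mult mult_left_mono)
  then have "\<bar>exp H - 1 - H\<bar> \<le> 2 * H\<^sup>2" using eB by (intro abs_exp_minus_one_minus_le) simp
  have "\<bar>(exp H - 1) / e - p\<bar> = \<bar>exp H - 1 - H\<bar> / e"
    using e unfolding Hp by (simp add: field_simps)
  also have "\<dots> \<le> 2 * H\<^sup>2 / e" using \<open>\<bar>exp H - 1 - H\<bar> \<le> 2 * H\<^sup>2\<close> e by (simp add: divide_right_mono)
  also have "\<dots> = 2 * e * p\<^sup>2" unfolding Hp using e by (simp add: power2_eq_square)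
  also have "\<dots> \<le> 2 * e * B_psi\<^sup>2"
    using pB e abs_le_square_iff[of p B_psi] B_psi_pos by simp
  finally have "\<bar>(exp H - 1) / e - p\<bar> \<le> 2 * e * B_psi\<^sup>2" .
  moreover have "\<bar>p - s\<bar> \<le> A_dpsi * e * s" unfolding p_def using psi_w_approx[OF e s] .
  moreover have "A_dpsi * e * s \<le> A_dpsi * e * S" using A_dpsi_pos e s by (intro mult_left_mono) auto
  ultimately show ?thesis unfolding H_def[symmetric] by (simp add: algebra_simps)
qed

lemma dpsi_w_numer_approx:
  assumes e: "0 < e" "e \<le> 1" and s: "0 \<le> s" "s \<le> S"
  shows "\<bar>dpsi_w_numer e s - (2 * V * \<gamma> - 2 * V\<^sup>2 * s - s)\<bar> \<le> e * (\<gamma>\<^sup>2 + V\<^sup>2 * S\<^sup>2 + (2 + S) * S\<^sup>2)"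
proof -
  have es: "0 \<le> e * s" "e * s \<le> S" using e s by (auto intro: order_trans[OF mult_left_le_one_le])
  have "s\<^sup>2 \<le> S\<^sup>2" using s by (simp add: power_mono)
  then have "V\<^sup>2 * s\<^sup>2 \<le> V\<^sup>2 * S\<^sup>2" "(2 + e * s) * s\<^sup>2 \<le> (2 + S) * S\<^sup>2"
    using es by (auto intro: mult_mono)
  moreover have "0 \<le> (2 + e * s) * s\<^sup>2" "0 \<le> V\<^sup>2 * s\<^sup>2" "0 \<le> \<gamma>\<^sup>2" using es by simp_all
  ultimately have "\<bar>\<gamma>\<^sup>2 - V\<^sup>2 * s\<^sup>2 - (2 + e * s) * s\<^sup>2\<bar> \<le> \<gamma>\<^sup>2 + V\<^sup>2 * S\<^sup>2 + (2 + S) * S\<^sup>2"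
    by (simp only: abs_le_iff) (intro conjI; linarith)
  moreover have "dpsi_w_numer e s - (2 * V * \<gamma> - 2 * V\<^sup>2 * s - s)
      = e * (\<gamma>\<^sup>2 - V\<^sup>2 * s\<^sup>2 - (2 + e * s) * s\<^sup>2)"
    unfolding dpsi_w_numer_def by (simp add: power2_eq_square algebra_simps)
  ultimately show ?thesis using e by (simp add: abs_mult mult_left_mono)
qed

lemma abs_dpsi_kdv_le: "0 \<le> s \<Longrightarrow> s \<le> S \<Longrightarrow> \<bar>2 * V * \<gamma> - 2 * V\<^sup>2 * s - s\<bar> \<le> 2 * V * \<gamma> + 2 * V\<^sup>2 * S + S"
proof -
  assume s: "0 \<le> s" "s \<le> S"
  then have "2 * V\<^sup>2 * s \<le> 2 * V\<^sup>2 * S" "0 \<le> 2 * V\<^sup>2 * s" "0 \<le> 2 * V * \<gamma>"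
    using V_ge_1 gamma_pos by (auto intro: mult_left_mono)
  then show ?thesis using s by (simp only: abs_le_iff) (intro conjI; linarith)
qed

definition A_numer :: real where
  "A_numer = (\<gamma>\<^sup>2 + V\<^sup>2 * S\<^sup>2 + (2 + S) * S\<^sup>2) + (2 * V * \<gamma> + 2 * V\<^sup>2 * S + S) * (3 * S * (1 + S)\<^sup>2)"

lemma dpsi_w_expansion:
  assumes e: "0 < e" "e \<le> 1" and s: "0 \<le> s" "s \<le> S"
  shows "\<bar>(dpsi_w e s - 1) / e - (2 * V * \<gamma> - 2 * V\<^sup>2 * s - s)\<bar> \<le> A_numer * e"
proof -
  define N where "N = 1 + e * s"
  define N0 where "N0 = 2 * V * \<gamma> - 2 * V\<^sup>2 * s - s"
  have es: "0 \<le> e * s" "e * s \<le> S" using e s by (auto intro: order_trans[OF mult_left_le_one_le])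
  have N3: "1 \<le> N ^ 3" unfolding N_def using es by simp
  then have "N ^ 3 \<noteq> 0" by linarith
  then have split: "(dpsi_w e s - 1) / e - N0
      = (dpsi_w_numer e s - N0) / N ^ 3 - N0 * ((N ^ 3 - 1) / N ^ 3)"
    using dpsi_w_minus_one[of e s] e s unfolding N_def[symmetric] by (simp add: field_simps)
  have "\<bar>(dpsi_w_numer e s - N0) / N ^ 3\<bar> \<le> \<bar>dpsi_w_numer e s - N0\<bar>"
    using N3 by (simp add: divide_le_self)
  with dpsi_w_numer_approx[OF e s]
  have numer: "\<bar>(dpsi_w_numer e s - N0) / N ^ 3\<bar> \<le> e * (\<gamma>\<^sup>2 + V\<^sup>2 * S\<^sup>2 + (2 + S) * S\<^sup>2)"
    unfolding N0_def by linarith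
  have "(N ^ 3 - 1) / N ^ 3 \<le> N ^ 3 - 1" using N3 by (intro divide_le_self) auto
  also have "\<dots> \<le> 3 * (e * s) * (1 + S)\<^sup>2"
    unfolding N_def using es by (rule one_plus_cube_minus_one_le)
  also have "\<dots> \<le> e * (3 * S * (1 + S)\<^sup>2)" using e s by simp
  finally have "\<bar>N0 * ((N ^ 3 - 1) / N ^ 3)\<bar> \<le> (2 * V * \<gamma> + 2 * V\<^sup>2 * S + S) * (e * (3 * S * (1 + S)\<^sup>2))"
    unfolding abs_mult N0_def using abs_dpsi_kdv_le[OF s] N3
    by (intro mult_mono) (auto intro: divide_nonneg_nonneg)
  with numer have "\<bar>(dpsi_w e s - 1) / e - N0\<bar>
      \<le> e * (\<gamma>\<^sup>2 + V\<^sup>2 * S\<^sup>2 + (2 + S) * S\<^sup>2) + (2 * V * \<gamma> + 2 * V\<^sup>2 * S + S) * (e * (3 * S * (1 + S)\<^sup>2))"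
    unfolding split by linarith
  also have "\<dots> = A_numer * e" unfolding A_numer_def by (simp add: algebra_simps)
  finally show ?thesis unfolding N0_def .
qed

definition A_psi2 :: real where
  "A_psi2 = (2 * B_psi\<^sup>2 + A_dpsi * S) * (1 + A_dpsi) + S * A_dpsi + A_numer"

lemma A_psi2_pos: "A_psi2 > 0"
proof -
  have "A_numer \<ge> 0" unfolding A_numer_def using S_pos V_ge_1 gamma_pos
    by (intro add_nonneg_nonneg mult_nonneg_nonneg) auto
  then show ?thesis unfolding A_psi2_def using A_dpsi_pos S_pos B_psi_pos
    by (intro add_pos_nonneg mult_pos_pos) auto
qed

lemma DERIV_psi2_kdv: "DERIV psi2_kdv t :> 2 * V * \<gamma> - 2 * V\<^sup>2 * t"
  unfolding psi2_kdv_def[abs_def] by (auto intro!: derivative_eq_intros simp: power2_eq_square)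

lemma DERIV_energy_kdv: "DERIV energy_kdv t :> psi2_kdv t"
  unfolding energy_kdv_def[abs_def] psi2_kdv_def
  by (auto intro!: derivative_eq_intros simp: power2_eq_square power3_eq_cube)

lemma psi2_w_approx:
  assumes e: "0 < e" "e \<le> 1" and eB: "e * B_psi \<le> 1" and s: "0 \<le> s" "s \<le> S"
  shows "\<bar>psi2_w e s - psi2_kdv s\<bar> \<le> A_psi2 * e * s"
proof -
  have "\<bar>psi2_w e s - psi2_kdv s\<bar> \<le> (A_psi2 * e) * s"
  proof (rule MVT_abs_le_linear[of s "\<lambda>s. psi2_w e s - psi2_kdv s"
      "\<lambda>t. (exp (Phi (speed e) \<sigma> (1 + e * t)) * dpsi_w e t - 1) / e - (2 * V * \<gamma> - 2 * V\<^sup>2 * t)"])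
    show "psi2_w e 0 - psi2_kdv 0 = 0" by (simp add: psi2_w_def psi2_kdv_def)
  next
    fix t assume t: "0 \<le> t" "t \<le> s"
    have "1 + e * t > 0" using e t by (simp add: add_pos_nonneg)
    then show "DERIV (\<lambda>s. psi2_w e s - psi2_kdv s) t :>
        (exp (Phi (speed e) \<sigma> (1 + e * t)) * dpsi_w e t - 1) / e - (2 * V * \<gamma> - 2 * V\<^sup>2 * t)"
      using e by (intro DERIV_diff DERIV_psi2_w DERIV_psi2_kdv) auto
    have tS: "0 \<le> t" "t \<le> S" using t s by auto
    define E where "E = (exp (Phi (speed e) \<sigma> (1 + e * t)) - 1) / e"
    have decomp: "(exp (Phi (speed e) \<sigma> (1 + e * t)) * dpsi_w e t - 1) / e - (2 * V * \<gamma> - 2 * V\<^sup>2 * t)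
       = ((E - t) * dpsi_w e t + t * (dpsi_w e t - 1))
         + ((dpsi_w e t - 1) / e - (2 * V * \<gamma> - 2 * V\<^sup>2 * t - t))"
      unfolding E_def using e by (simp add: field_simps)
    have "\<bar>(E - t) * dpsi_w e t\<bar> \<le> e * (2 * B_psi\<^sup>2 + A_dpsi * S) * (1 + A_dpsi)"
      unfolding abs_mult E_def using exp_Phi_w_approx[OF e eB tS] dpsi_w_bound[OF e tS]
      by (intro mult_mono) auto
    moreover have "\<bar>t * (dpsi_w e t - 1)\<bar> \<le> S * (A_dpsi * e)"
      unfolding abs_mult using dpsi_w_approx[OF e tS] tS by (intro mult_mono) auto
    ultimately have "\<bar>(exp (Phi (speed e) \<sigma> (1 + e * t)) * dpsi_w e t - 1) / e - (2 * V * \<gamma> - 2 * V\<^sup>2 * t)\<bar>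
       \<le> e * (2 * B_psi\<^sup>2 + A_dpsi * S) * (1 + A_dpsi) + S * (A_dpsi * e) + A_numer * e"
      unfolding decomp using dpsi_w_expansion[OF e tS] by linarith
    also have "\<dots> = A_psi2 * e" unfolding A_psi2_def by (simp add: algebra_simps)
    finally show "\<bar>(exp (Phi (speed e) \<sigma> (1 + e * t)) * dpsi_w e t - 1) / e - (2 * V * \<gamma> - 2 * V\<^sup>2 * t)\<bar>
       \<le> A_psi2 * e" .
  qed (use s in auto)
  then show ?thesis by (simp add: mult.assoc)
qed

definition C_psi2 :: real where "C_psi2 = 2 * V * \<gamma> + V\<^sup>2 * S + A_psi2"

lemma psi2_w_bound:
  assumes e: "0 < e" "e \<le> 1" and eB: "e * B_psi \<le> 1" and s: "0 \<le> s" "s \<le> S"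
  shows "\<bar>psi2_w e s\<bar> \<le> C_psi2 * s"
proof -
  have "0 \<le> V\<^sup>2 * s" "V\<^sup>2 * s \<le> V\<^sup>2 * S" "0 \<le> 2 * V * \<gamma>"
    using s V_ge_1 gamma_pos by (auto intro: mult_left_mono)
  then have "\<bar>2 * V * \<gamma> - V\<^sup>2 * s\<bar> \<le> 2 * V * \<gamma> + V\<^sup>2 * S" by (simp only: abs_le_iff) linarith
  moreover have "psi2_kdv s = s * (2 * V * \<gamma> - V\<^sup>2 * s)"
    unfolding psi2_kdv_def by (simp add: power2_eq_square algebra_simps)
  ultimately have "\<bar>psi2_kdv s\<bar> \<le> (2 * V * \<gamma> + V\<^sup>2 * S) * s"
    using s by (simp add: abs_mult mult.commute mult_left_mono)
  moreover have "A_psi2 * e * s \<le> A_psi2 * s"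
    using A_psi2_pos e s by (simp add: mult_left_le_one_le mult.assoc mult_left_mono)
  ultimately show ?thesis
    using psi2_w_approx[OF e eB s] unfolding C_psi2_def by (simp add: algebra_simps)
qed

lemma DERIV_energy_w:
  assumes N: "1 + e * s > 0" and e: "e \<noteq> 0"
  shows "DERIV (energy_w e) s :> dpsi_w e s * psi2_w e s"
proof -
  define H where "H = Phi (speed e) \<sigma> (1 + e * s)"
  define N where "N = 1 + e * s"
  have D_N: "DERIV (\<lambda>s. 1 + e * s) s :> e" by (auto intro!: derivative_eq_intros)
  have "DERIV (\<lambda>s. (exp (Phi (speed e) \<sigma> (1 + e * s)) - 1 + (speed e)\<^sup>2 * (inverse (1 + e * s) - 1)
      + \<sigma> * ((1 + e * s) - 1)) / e ^ 3) s :>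
     (exp H * (dpsi_w e s * e) - 0 + (speed e)\<^sup>2 * (- (e * inverse ((1 + e * s) ^ Suc (Suc 0))) - 0)
      + \<sigma> * (e - 0)) / e ^ 3"
    unfolding H_def using N
    by (intro DERIV_cdivide DERIV_add DERIV_diff DERIV_cmult DERIV_chain2[OF DERIV_exp DERIV_Phi_w]
        DERIV_inverse_fun D_N DERIV_const) auto
  moreover have "(exp H * (dpsi_w e s * e) - 0 + (speed e)\<^sup>2 * (- (e * inverse ((1 + e * s) ^ Suc (Suc 0))) - 0)
      + \<sigma> * (e - 0)) / e ^ 3 = dpsi_w e s * psi2_w e s"
  proof -
    have "N \<noteq> 0" using N N_def by simp
    moreover have "dpsi_w e s = (speed e)\<^sup>2 / N ^ 3 - \<sigma> / N" unfolding dpsi_w_def dPhi_def N_def ..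
    moreover have "psi2_w e s = (exp H - N) / e\<^sup>2" unfolding psi2_w_def H_def N_def ..
    ultimately show ?thesis unfolding N_def[symmetric] using e
      by (simp only:) (simp add: field_simps power2_eq_square power3_eq_cube)
  qed
  moreover have "energy_w e = (\<lambda>s. (exp (Phi (speed e) \<sigma> (1 + e * s)) - 1
      + (speed e)\<^sup>2 * (inverse (1 + e * s) - 1) + \<sigma> * ((1 + e * s) - 1)) / e ^ 3)"
    unfolding energy_w_def[abs_def] sagdeev_def by (simp add: inverse_eq_divide)
  ultimately show ?thesis by simp
qed

definition A_energy :: real where "A_energy = A_dpsi * C_psi2 + A_psi2"

lemma A_energy_pos: "A_energy > 0"
  unfolding A_energy_def C_psi2_def using A_dpsi_pos A_psi2_pos S_pos V_ge_1 gamma_pos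
  by (intro add_nonneg_pos mult_nonneg_nonneg) auto

lemma energy_w_approx:
  assumes e: "0 < e" "e \<le> 1" and eB: "e * B_psi \<le> 1" and s: "0 \<le> s" "s \<le> S"
  shows "\<bar>energy_w e s - energy_kdv s\<bar> \<le> A_energy * e * s\<^sup>2"
proof -
  have "\<bar>energy_w e s - energy_kdv s\<bar> \<le> (A_energy * e) * s\<^sup>2"
  proof (rule MVT_abs_le_quadratic[of s "\<lambda>s. energy_w e s - energy_kdv s"
        "\<lambda>t. dpsi_w e t * psi2_w e t - psi2_kdv t"])
    show "energy_w e 0 - energy_kdv 0 = 0" by (simp add: energy_w_def energy_kdv_def)
  next
    fix t assume t: "0 \<le> t" "t \<le> s"
    have "1 + e * t > 0" using e t by (simp add: add_pos_nonneg)
    then show "DERIV (\<lambda>s. energy_w e s - energy_kdv s) t :> dpsi_w e t * psi2_w e t - psi2_kdv t"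
      using e by (intro DERIV_diff DERIV_energy_w DERIV_energy_kdv) auto
    have tS: "0 \<le> t" "t \<le> S" using t s by auto
    have "\<bar>dpsi_w e t * psi2_w e t - psi2_kdv t\<bar> = \<bar>(dpsi_w e t - 1) * psi2_w e t + (psi2_w e t - psi2_kdv t)\<bar>"
      by (simp add: algebra_simps)
    also have "\<dots> \<le> \<bar>dpsi_w e t - 1\<bar> * \<bar>psi2_w e t\<bar> + \<bar>psi2_w e t - psi2_kdv t\<bar>"
      by (metis abs_mult abs_triangle_ineq)
    also have "\<dots> \<le> (A_dpsi * e) * (C_psi2 * t) + A_psi2 * e * t"
      using dpsi_w_approx[OF e tS] psi2_w_bound[OF e eB tS] psi2_w_approx[OF e eB tS]
      by (intro add_mono mult_mono) auto
    also have "\<dots> = (A_energy * e) * t" unfolding A_energy_def by (simp add: algebra_simps)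
    finally show "\<bar>dpsi_w e t * psi2_w e t - psi2_kdv t\<bar> \<le> (A_energy * e) * t" .
  qed (use s in auto)
  then show ?thesis by (simp add: mult.assoc)
qed

lemma energy_kdv_S: "energy_kdv S = - V * \<gamma> * S\<^sup>2"
proof -
  have "V\<^sup>2 * S / 3 = 2 * V * \<gamma>" unfolding S_def using V_ge_1 by (simp add: power2_eq_square field_simps)
  moreover have "V\<^sup>2 * S ^ 3 / 3 = (V\<^sup>2 * S / 3) * S\<^sup>2" by (simp add: power2_eq_square power3_eq_cube)
  ultimately have "V\<^sup>2 * S ^ 3 / 3 = 2 * V * \<gamma> * S\<^sup>2" by simp
  then show ?thesis unfolding energy_kdv_def by simp
qed

text \<open>Near \<open>\<psi> = 0\<close> the KdV profile satisfies \<open>\<psi>' \<approx> - kdv_rate * \<psi>\<close>.\<close>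

definition kdv_rate :: real where "kdv_rate = sqrt (2 * V * \<gamma>)"
definition lyap_weight :: real where "lyap_weight = 1 / (3 * kdv_rate)"
definition decay_rate :: real where "decay_rate = kdv_rate / 100"

lemma kdv_rate_pos: "kdv_rate > 0"
  unfolding kdv_rate_def using V_ge_1 gamma_pos by simp

lemma kdv_rate_sq: "kdv_rate\<^sup>2 = 2 * V * \<gamma>"
  unfolding kdv_rate_def using V_ge_1 gamma_pos by simp

lemma decay_rate_pos: "decay_rate > 0"
  unfolding decay_rate_def using kdv_rate_pos by simp

lemma lyap_weight_pos: "lyap_weight > 0"
  unfolding lyap_weight_def using kdv_rate_pos by simp

definition small_eps :: "real \<Rightarrow> bool" where
  "small_eps e \<longleftrightarrow> 0 < e \<and> e \<le> 1 \<and> e * B_psi \<le> 1 \<and> A_dpsi * e \<le> 1 / 10 \<and>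
     A_energy * e \<le> kdv_rate\<^sup>2 / 40 \<and> A_psi2 * e \<le> 3 * kdv_rate\<^sup>2 / 100"

lemma small_eps_exists: "\<exists>e1>0. \<forall>e. 0 < e \<and> e < e1 \<longrightarrow> small_eps e"
proof -
  define e1 where "e1 = Min {1, 1 / B_psi, 1 / (10 * A_dpsi), kdv_rate\<^sup>2 / (40 * A_energy),
    3 * kdv_rate\<^sup>2 / (100 * A_psi2)}"
  have "e1 > 0"
    unfolding e1_def using B_psi_pos A_dpsi_pos A_energy_pos A_psi2_pos kdv_rate_pos by simp
  moreover have "small_eps e" if "0 < e" "e < e1" for e
    using that B_psi_pos A_dpsi_pos A_energy_pos A_psi2_pos
    unfolding small_eps_def e1_def by (auto simp: field_simps)
  ultimately show ?thesis by blast
qed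

lemma small_epsD:
  assumes "small_eps e"
  shows "0 < e" "e \<le> 1" "e * B_psi \<le> 1" "A_dpsi * e \<le> 1 / 10"
    "A_energy * e \<le> kdv_rate\<^sup>2 / 40" "A_psi2 * e \<le> 3 * kdv_rate\<^sup>2 / 100"
  using assms unfolding small_eps_def by auto

lemma small_eps_energy_less: "small_eps e \<Longrightarrow> A_energy * e < V * \<gamma>"
proof -
  assume "small_eps e"
  then have "A_energy * e \<le> 2 * V * \<gamma> / 40" using small_epsD(5) unfolding kdv_rate_sq by blast
  moreover have "V * \<gamma> > 0" using V_ge_1 gamma_pos by simp
  ultimately show ?thesis by linarith
qed

context
  fixes e s :: real
  assumes e: "small_eps e" and s: "0 \<le> s" "s \<le> S"
begin

lemma psi_w_between: "9 / 10 * s \<le> psi_w e s \<and> psi_w e s \<le> 11 / 10 * s"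
proof -
  have "\<bar>psi_w e s - s\<bar> \<le> A_dpsi * e * s" using psi_w_approx small_epsD[OF e] s by simp
  moreover have "A_dpsi * e * s \<le> 1 / 10 * s" using small_epsD(4)[OF e] s by (intro mult_right_mono) auto
  ultimately show ?thesis by (simp add: abs_le_iff)
qed

lemma energy_w_lower:
  "2 * energy_w e s \<ge> s\<^sup>2 * (kdv_rate\<^sup>2 - 2 * kdv_rate * (lyap_weight * V\<^sup>2 * s) - 2 * A_energy * e)"
proof -
  have "energy_w e s \<ge> energy_kdv s - A_energy * e * s\<^sup>2"
    using energy_w_approx small_epsD[OF e] s by (smt (verit))
  moreover have "2 * kdv_rate * (lyap_weight * V\<^sup>2 * s) = 2 / 3 * V\<^sup>2 * s"
    unfolding lyap_weight_def using kdv_rate_pos by (simp add: field_simps)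
  then have "2 * energy_kdv s = s\<^sup>2 * (kdv_rate\<^sup>2 - 2 * kdv_rate * (lyap_weight * V\<^sup>2 * s))"
    unfolding energy_kdv_def kdv_rate_sq by (simp add: power2_eq_square power3_eq_cube algebra_simps)
  ultimately show ?thesis by (simp add: algebra_simps)
qed

lemma sqrt_energy_w_le: "sqrt (2 * energy_w e s) \<le> 11 / 10 * kdv_rate * s"
proof -
  have "energy_w e s \<le> energy_kdv s + A_energy * e * s\<^sup>2"
    using energy_w_approx small_epsD[OF e] s by (smt (verit))
  moreover have "energy_kdv s \<le> V * \<gamma> * s\<^sup>2" unfolding energy_kdv_def using s by simp
  moreover have "A_energy * e * s\<^sup>2 \<le> kdv_rate\<^sup>2 / 40 * s\<^sup>2"
    using small_epsD(5)[OF e] by (intro mult_right_mono) auto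
  ultimately have "2 * energy_w e s \<le> 21 / 20 * (kdv_rate * s)\<^sup>2"
    unfolding kdv_rate_sq power_mult_distrib by (simp add: algebra_simps)
  also have "\<dots> \<le> 121 / 100 * (kdv_rate * s)\<^sup>2" by (intro mult_right_mono) auto
  also have "\<dots> = (11 / 10 * kdv_rate * s)\<^sup>2" by (simp add: power2_eq_square)
  finally have "sqrt (2 * energy_w e s) \<le> sqrt ((11 / 10 * kdv_rate * s)\<^sup>2)"
    by (rule real_sqrt_le_mono)
  moreover have "0 \<le> 11 / 10 * kdv_rate * s" using kdv_rate_pos s by simp
  ultimately show ?thesis by (simp only: real_sqrt_abs abs_of_nonneg)
qed

lemma psi_w_minus_sqrt_energy: "psi_w e s - lyap_weight * sqrt (2 * energy_w e s) \<ge> s / 2"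
proof -
  have "lyap_weight * sqrt (2 * energy_w e s) \<le> lyap_weight * (11 / 10 * kdv_rate * s)"
    using sqrt_energy_w_le lyap_weight_pos by (intro mult_left_mono) auto
  also have "\<dots> = 11 / 30 * s" unfolding lyap_weight_def using kdv_rate_pos by simp
  finally show ?thesis using psi_w_between s by simp
qed

lemma lyapunov_lhs_le:
  "lyap_weight * psi2_w e s + decay_rate * psi_w e s
    \<le> s * (kdv_rate / 3 - lyap_weight * V\<^sup>2 * s + 3 * kdv_rate / 100)"
proof -
  have e01: "0 < e" "e \<le> 1" using small_epsD[OF e] by auto
  have "lyap_weight * (A_psi2 * e) \<le> lyap_weight * (3 * kdv_rate\<^sup>2 / 100)"
    using small_epsD(6)[OF e] lyap_weight_pos by (intro mult_left_mono) auto
  also have "\<dots> = kdv_rate / 100"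
    unfolding lyap_weight_def using kdv_rate_pos by (simp add: power2_eq_square)
  finally have "lyap_weight * A_psi2 * e + decay_rate * (11 / 10) \<le> 3 * kdv_rate / 100"
    unfolding decay_rate_def using kdv_rate_pos by (simp add: mult.assoc)
  then have "s * (lyap_weight * A_psi2 * e + decay_rate * (11 / 10)) \<le> s * (3 * kdv_rate / 100)"
    using s by (intro mult_left_mono) auto
  moreover have "lyap_weight * psi2_w e s \<le> lyap_weight * (psi2_kdv s + A_psi2 * e * s)"
    using psi2_w_approx[OF e01 small_epsD(3)[OF e] s] lyap_weight_pos
    by (intro mult_left_mono) auto
  moreover have "lyap_weight * (psi2_kdv s + A_psi2 * e * s)
      = s * (kdv_rate / 3 - lyap_weight * V\<^sup>2 * s) + s * (lyap_weight * A_psi2 * e)"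
    unfolding psi2_kdv_def lyap_weight_def kdv_rate_sq[symmetric]
    using kdv_rate_pos by (simp add: power2_eq_square field_simps)
  moreover have "decay_rate * psi_w e s \<le> s * (decay_rate * (11 / 10))"
    using psi_w_between decay_rate_pos by (simp add: mult_left_mono mult.commute mult.left_commute)
  ultimately show ?thesis by (simp add: algebra_simps)
qed

text \<open>With \<open>\<psi>' = - sqrt (2 energy_w)\<close> this is \<open>\<Lambda>' + decay_rate \<Lambda> \<le> 0\<close> for the
  Lyapunov function \<open>\<Lambda> = \<psi> + lyap_weight \<psi>'\<close>.\<close>

lemma lyapunov_rate_bound:
  assumes "energy_w e s \<ge> 0"
  shows "lyap_weight * psi2_w e s + decay_rate * psi_w e s \<le> sqrt (2 * energy_w e s)"
proof (rule le_sqrt_of_quadratic_margin[OF kdv_rate_pos s(1) _ _ _ _ _ lyapunov_lhs_le])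
  show "2 * energy_w e s \<ge> s\<^sup>2 * (kdv_rate\<^sup>2 - 2 * kdv_rate * (lyap_weight * V\<^sup>2 * s) - 2 * A_energy * e)"
    by (rule energy_w_lower)
  show "0 \<le> 2 * A_energy * e" "2 * A_energy * e \<le> kdv_rate\<^sup>2 / 20"
    using A_energy_pos small_epsD(1,5)[OF e] by auto
qed (use assms lyap_weight_pos kdv_rate_pos s in auto)

end

end

section \<open>A solitary wave and its rescaling\<close>

locale soliton = wave_params +
  fixes \<epsilon> :: real and n u \<phi> :: "real \<Rightarrow> real"
  assumes eps_pos: "\<epsilon> > 0" and solitary: "solitary_wave \<sigma> \<gamma> \<epsilon> n u \<phi>"
begin

lemma smooth_n: "smooth_fun n" and smooth_u: "smooth_fun u" and smooth_phi: "smooth_fun \<phi>"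
  and n_pos: "\<And>x. n x > 0"
  and mass: "\<And>x. - speed \<epsilon> * deriv n x + deriv (\<lambda>x. n x * u x) x = 0"
  and momentum: "\<And>x. - speed \<epsilon> * deriv u x + u x * deriv u x + \<sigma> * deriv n x / n x = - deriv \<phi> x"
  and poisson: "\<And>x. \<epsilon> * deriv (deriv \<phi>) x = exp (\<phi> x) - n x"
  and n_lim: "(n \<longlongrightarrow> 1) at_top" and u_lim: "(u \<longlongrightarrow> 0) at_top" and phi_lim: "(\<phi> \<longlongrightarrow> 0) at_top"
  and even: "\<And>x. n (- x) = n x \<and> \<phi> (- x) = \<phi> x"
  and n_anti: "strict_antimono_on {0<..} n" and phi_anti: "strict_antimono_on {0<..} \<phi>"
  using solitary unfolding solitary_wave_def tw_solution_def speed_def V_def by auto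

lemma DERIV_n: "DERIV n x :> deriv n x"
  using smooth_n by (rule smooth_fun_imp_DERIV)

lemma DERIV_u: "DERIV u x :> deriv u x"
  using smooth_u by (rule smooth_fun_imp_DERIV)

lemma DERIV_phi: "DERIV \<phi> x :> deriv \<phi> x"
  using smooth_phi by (rule smooth_fun_imp_DERIV)

lemma DERIV_deriv_phi: "DERIV (deriv \<phi>) x :> deriv (deriv \<phi>) x"
  using smooth_phi by (intro smooth_fun_imp_DERIV smooth_fun_deriv)

lemma u_eq_density: "u x = speed \<epsilon> * (1 - 1 / n x)"
proof -
  have "DERIV (\<lambda>x. n x * u x - speed \<epsilon> * n x) y :> 0" for y
  proof -
    have "DERIV (\<lambda>x. n x * u x) y :> deriv (\<lambda>x. n x * u x) y"
      using smooth_fun_imp_DERIV[OF smooth_fun_mult[OF smooth_n smooth_u]] .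
    from DERIV_diff[OF this DERIV_cmult[OF DERIV_n]]
    have "DERIV (\<lambda>x. n x * u x - speed \<epsilon> * n x) y :> deriv (\<lambda>x. n x * u x) y - speed \<epsilon> * deriv n y" .
    moreover have "deriv (\<lambda>x. n x * u x) y - speed \<epsilon> * deriv n y = 0" using mass[of y] by linarith
    ultimately show ?thesis by simp
  qed
  moreover have "((\<lambda>x. n x * u x - speed \<epsilon> * n x) \<longlongrightarrow> 1 * 0 - speed \<epsilon> * 1) at_top"
    by (intro tendsto_intros n_lim u_lim)
  ultimately have "n x * u x - speed \<epsilon> * n x = - speed \<epsilon>"
    by (intro DERIV_zero_imp_eq_limit) simp_all
  then show ?thesis using n_pos[of x] by (simp add: field_simps)
qed

lemma phi_eq_Phi: "\<phi> x = Phi (speed \<epsilon>) \<sigma> (n x)"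
proof -
  let ?G = "\<lambda>x. - speed \<epsilon> * u x + u x * u x / 2 + \<sigma> * ln (n x) + \<phi> x"
  have "DERIV ?G y :> 0" for y
  proof -
    have "DERIV ?G y :> - speed \<epsilon> * deriv u y + (deriv u y * u y + deriv u y * u y) / 2
        + \<sigma> * (1 / n y * deriv n y) + deriv \<phi> y"
      by (intro DERIV_add DERIV_cmult DERIV_cdivide DERIV_mult DERIV_u DERIV_phi
          DERIV_chain2[OF DERIV_ln_divide[OF n_pos] DERIV_n])
    then show ?thesis using momentum[of y] by (simp add: field_simps)
  qed
  moreover have "(?G \<longlongrightarrow> - speed \<epsilon> * 0 + 0 * 0 / 2 + \<sigma> * ln 1 + 0) at_top"
    by (intro tendsto_intros n_lim u_lim phi_lim) auto
  ultimately have "?G x = 0" by (intro DERIV_zero_imp_eq_limit) simp_all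
  then have "\<phi> x = speed \<epsilon> * u x - u x * u x / 2 - \<sigma> * ln (n x)" by (simp add: algebra_simps)
  moreover have "C * (C * (1 - t)) - C * (1 - t) * (C * (1 - t)) / 2 = C\<^sup>2 / 2 * (1 - t * t)" for C t :: real
    by (simp add: power2_eq_square field_simps)
  moreover have "1 / (n x)\<^sup>2 = (1 / n x) * (1 / n x)" by (simp add: power2_eq_square)
  ultimately show ?thesis unfolding Phi_def u_eq_density by simp
qed

lemma n_gt_1: "x > 0 \<Longrightarrow> n x > 1"
  using strict_antimono_on_gt_limit[OF n_anti n_lim] .

lemma phi_pos: "x > 0 \<Longrightarrow> \<phi> x > 0"
  using strict_antimono_on_gt_limit[OF phi_anti phi_lim] .

lemma n_ge_1: "n x \<ge> 1"
  using even DERIV_n n_gt_1 by (intro even_ge_from_right) (auto intro: DERIV_isCont)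

lemma phi_nonneg: "\<phi> x \<ge> 0"
  using even DERIV_phi phi_pos by (intro even_ge_from_right) (auto intro: DERIV_isCont)

lemma deriv_phi_0: "deriv \<phi> 0 = 0"
  using even_fun_DERIV_0[of \<phi> "deriv \<phi> 0"] even DERIV_phi by blast

lemma deriv_phi_nonpos: "x \<ge> 0 \<Longrightarrow> deriv \<phi> x \<le> 0"
  using deriv_phi_0 strict_antimono_on_DERIV_nonpos[OF phi_anti DERIV_phi] by (cases "x = 0") auto

lemma deriv_phi_eq: "deriv \<phi> x = dPhi (speed \<epsilon>) \<sigma> (n x) * deriv n x"
proof -
  have "DERIV (\<lambda>x. Phi (speed \<epsilon>) \<sigma> (n x)) x :> dPhi (speed \<epsilon>) \<sigma> (n x) * deriv n x"
    by (rule DERIV_chain2[OF DERIV_Phi[OF n_pos] DERIV_n])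
  moreover have "\<phi> = (\<lambda>x. Phi (speed \<epsilon>) \<sigma> (n x))" using phi_eq_Phi by (rule ext)
  ultimately show ?thesis using DERIV_imp_deriv by simp
qed

definition energy :: "real \<Rightarrow> real" where
  "energy y = \<epsilon> * (deriv \<phi> y * deriv \<phi> y) / 2 - exp (\<phi> y) - (speed \<epsilon>)\<^sup>2 * inverse (n y) - \<sigma> * n y"

lemma DERIV_energy: "DERIV energy y :> 0"
proof -
  define c where "c = speed \<epsilon>"
  have D: "DERIV energy y :> \<epsilon> * (deriv (deriv \<phi>) y * deriv \<phi> y + deriv (deriv \<phi>) y * deriv \<phi> y) / 2
      - exp (\<phi> y) * deriv \<phi> y - c\<^sup>2 * (- (deriv n y * inverse (n y ^ Suc (Suc 0)))) - \<sigma> * deriv n y"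
    unfolding energy_def[abs_def] c_def using n_pos[of y]
    by (intro DERIV_diff DERIV_cdivide DERIV_cmult DERIV_inverse_fun DERIV_n DERIV_mult DERIV_deriv_phi
        DERIV_chain2[OF DERIV_exp DERIV_phi]) auto
  have identity: "\<epsilon> * (ddP * dP + ddP * dP) / 2 - E * dP - c\<^sup>2 * (- (dN * inverse (N ^ Suc (Suc 0))))
      - \<sigma> * dN = 0"
    if "N \<noteq> 0" "\<epsilon> * ddP = E - N" "dP = (c\<^sup>2 / N ^ 3 - \<sigma> / N) * dN" for N dN dP ddP E
  proof -
    have "\<epsilon> * (ddP * dP + ddP * dP) / 2 - E * dP = (E - N) * dP - E * dP"
      using that(2) by (simp add: algebra_simps flip: that(2))
    also have "\<dots> = - (c\<^sup>2 / N\<^sup>2 - \<sigma>) * dN" using that(1,3)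
      by (simp add: field_simps power2_eq_square power3_eq_cube)
    finally show ?thesis using that(1) by (simp add: field_simps power2_eq_square)
  qed
  have "n y \<noteq> 0" using n_pos[of y] by simp
  moreover have "deriv \<phi> y = (c\<^sup>2 / n y ^ 3 - \<sigma> / n y) * deriv n y"
    unfolding deriv_phi_eq dPhi_def c_def ..
  ultimately have "\<epsilon> * (deriv (deriv \<phi>) y * deriv \<phi> y + deriv (deriv \<phi>) y * deriv \<phi> y) / 2
      - exp (\<phi> y) * deriv \<phi> y - c\<^sup>2 * (- (deriv n y * inverse (n y ^ Suc (Suc 0)))) - \<sigma> * deriv n y = 0"
    by (rule identity[where N = "n y" and dN = "deriv n y" and dP = "deriv \<phi> y"
        and ddP = "deriv (deriv \<phi>) y" and E = "exp (\<phi> y)", OF _ poisson])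
  with D show ?thesis by simp
qed

text \<open>The constant value of \<open>energy\<close> is fixed by \<open>\<phi>' \<rightarrow> 0\<close>, which follows from
  \<open>tendsto_deriv_sq_eq_0\<close> since \<open>\<phi> \<ge> 0\<close> is decreasing on \<open>(0, \<infinity>)\<close>.\<close>

lemma first_integral: "\<epsilon> * (deriv \<phi> x)\<^sup>2 / 2 = sagdeev (speed \<epsilon>) \<sigma> (n x)"
proof -
  define c where "c = speed \<epsilon>"
  have energy_const: "energy y = energy 0" for y using DERIV_energy DERIV_isconst_all by blast
  have sq: "(deriv \<phi> y)\<^sup>2 = 2 / \<epsilon> * (energy 0 + exp (\<phi> y) + c\<^sup>2 * inverse (n y) + \<sigma> * n y)" for y
    using energy_const[of y] eps_pos unfolding energy_def c_def by (simp add: field_simps power2_eq_square)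
  have "((\<lambda>y. (deriv \<phi> y)\<^sup>2) \<longlongrightarrow> 2 / \<epsilon> * (energy 0 + exp 0 + c\<^sup>2 * inverse 1 + \<sigma> * 1)) at_top"
    unfolding sq by (intro tendsto_intros n_lim phi_lim) simp
  then have "2 / \<epsilon> * (energy 0 + exp 0 + c\<^sup>2 * inverse 1 + \<sigma> * 1) = 0"
    using DERIV_phi deriv_phi_nonpos phi_nonneg by (intro tendsto_deriv_sq_eq_0) auto
  then have energy_0: "energy 0 = - (1 + c\<^sup>2 + \<sigma>)" using eps_pos by simp
  have "\<epsilon> * (deriv \<phi> x)\<^sup>2 / 2 = energy 0 + exp (\<phi> x) + c\<^sup>2 * inverse (n x) + \<sigma> * n x"
    using sq[of x] eps_pos by (simp add: field_simps)
  also have "\<dots> = sagdeev (speed \<epsilon>) \<sigma> (n x)"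
    unfolding energy_0 sagdeev_def phi_eq_Phi[symmetric] c_def by (simp add: algebra_simps divide_inverse)
  finally show ?thesis .
qed

definition Nt :: "real \<Rightarrow> real" where "Nt x = (n x - 1) / \<epsilon>"
definition psi :: "real \<Rightarrow> real" where "psi x = \<phi> x / \<epsilon>"

lemma n_eq_Nt: "n x = 1 + \<epsilon> * Nt x"
  unfolding Nt_def using eps_pos by simp

lemma Nt_nonneg: "Nt x \<ge> 0"
  unfolding Nt_def using n_ge_1 eps_pos by simp

lemma psi_eq_psi_w: "psi x = psi_w \<epsilon> (Nt x)"
  unfolding psi_def psi_w_def phi_eq_Phi n_eq_Nt[symmetric] ..

lemma DERIV_psi_phi: "DERIV psi x :> deriv \<phi> x / \<epsilon>"
  unfolding psi_def[abs_def] by (rule DERIV_cdivide[OF DERIV_phi])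

lemma deriv_psi: "deriv psi x = deriv \<phi> x / \<epsilon>"
  using DERIV_psi_phi by (rule DERIV_imp_deriv)

lemma DERIV_psi: "DERIV psi x :> deriv psi x"
  unfolding deriv_psi by (rule DERIV_psi_phi)

lemma DERIV_deriv_psi_phi: "DERIV (deriv psi) x :> deriv (deriv \<phi>) x / \<epsilon>"
proof -
  have "deriv psi = (\<lambda>x. deriv \<phi> x / \<epsilon>)" using deriv_psi by (rule ext)
  then show ?thesis using DERIV_cdivide[OF DERIV_deriv_phi] by simp
qed

lemma deriv2_psi: "deriv (deriv psi) x = (exp (\<phi> x) - n x) / \<epsilon>\<^sup>2"
proof -
  have "deriv (deriv psi) x = deriv (deriv \<phi>) x / \<epsilon>"
    using DERIV_deriv_psi_phi by (rule DERIV_imp_deriv)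
  also have "\<dots> = (exp (\<phi> x) - n x) / \<epsilon>\<^sup>2" using poisson[of x] eps_pos by (simp add: field_simps power2_eq_square)
  finally show ?thesis .
qed

lemma deriv2_psi_eq_psi2_w: "deriv (deriv psi) x = psi2_w \<epsilon> (Nt x)"
  unfolding deriv2_psi psi2_w_def n_eq_Nt[symmetric] phi_eq_Phi ..

lemma DERIV_deriv_psi: "DERIV (deriv psi) x :> psi2_w \<epsilon> (Nt x)"
  using DERIV_deriv_psi_phi[of x] DERIV_imp_deriv[OF DERIV_deriv_psi_phi[of x]] deriv2_psi_eq_psi2_w[of x]
  by simp

lemma deriv_psi_sq: "(deriv psi x)\<^sup>2 = 2 * energy_w \<epsilon> (Nt x)"
proof -
  have "(deriv psi x)\<^sup>2 = 2 * (\<epsilon> * (deriv \<phi> x)\<^sup>2 / 2) / \<epsilon> ^ 3"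
    unfolding deriv_psi using eps_pos by (simp add: power2_eq_square power3_eq_cube)
  also have "\<dots> = 2 * energy_w \<epsilon> (Nt x)" unfolding first_integral energy_w_def n_eq_Nt[symmetric] by simp
  finally show ?thesis .
qed

lemma deriv_psi_nonpos: "x \<ge> 0 \<Longrightarrow> deriv psi x \<le> 0"
  unfolding deriv_psi using deriv_phi_nonpos eps_pos by (simp add: divide_nonpos_pos)

lemma deriv_psi_0: "deriv psi 0 = 0"
  unfolding deriv_psi deriv_phi_0 by simp

lemma Nt_tendsto_0: "(Nt \<longlongrightarrow> 0) at_top"
proof -
  have "((\<lambda>x. (n x - 1) / \<epsilon>) \<longlongrightarrow> (1 - 1) / \<epsilon>) at_top"
    using eps_pos by (intro tendsto_intros n_lim) auto
  then show ?thesis unfolding Nt_def[abs_def] by simp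
qed

text \<open>The amplitude bound: where \<open>Nt\<close> crosses the level \<open>S\<close>, \<open>\<psi>'\<^sup>2 = 2 energy_w \<epsilon> S\<close> would
  be negative, because \<open>energy_kdv S < 0\<close> and \<open>energy_w\<close> is close to \<open>energy_kdv\<close>.\<close>

lemma Nt_le_S:
  assumes "small_eps \<epsilon>"
  shows "Nt x \<le> S"
proof (rule ccontr)
  assume "\<not> Nt x \<le> S"
  moreover have "Nt \<bar>x\<bar> = Nt x" unfolding Nt_def using even[of x] by (cases "x \<ge> 0") auto
  ultimately have x0: "\<bar>x\<bar> \<ge> 0" "Nt \<bar>x\<bar> > S" by auto
  obtain X where X: "\<And>y. y \<ge> X \<Longrightarrow> Nt y < S"
    using order_tendstoD(2)[OF Nt_tendsto_0, of S] S_pos unfolding eventually_at_top_linorder by auto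
  have "continuous_on {\<bar>x\<bar>..max X \<bar>x\<bar>} Nt"
    unfolding Nt_def[abs_def] using DERIV_n eps_pos
    by (intro continuous_intros continuous_at_imp_continuous_on ballI DERIV_isCont) auto
  moreover have "Nt (max X \<bar>x\<bar>) \<le> S" using X[of "max X \<bar>x\<bar>"] by simp
  ultimately obtain z where "Nt z = S"
    using IVT2'[of Nt "max X \<bar>x\<bar>" S "\<bar>x\<bar>"] x0 by force
  have "energy_w \<epsilon> S \<le> energy_kdv S + A_energy * \<epsilon> * S\<^sup>2"
    using energy_w_approx[of \<epsilon> S] small_epsD[OF assms] S_pos by simp
  also have "\<dots> < 0"
    using small_eps_energy_less[OF assms] S_pos unfolding energy_kdv_S by simp
  finally have "(deriv psi z)\<^sup>2 < 0" unfolding deriv_psi_sq \<open>Nt z = S\<close> by simp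
  then show False by simp
qed

definition lyap :: "real \<Rightarrow> real" where "lyap x = psi x + lyap_weight * deriv psi x"

context
  assumes small: "small_eps \<epsilon>"
begin

lemma energy_w_Nt_nonneg: "energy_w \<epsilon> (Nt x) \<ge> 0"
  using zero_le_power2[of "deriv psi x"] unfolding deriv_psi_sq by simp

lemma deriv_psi_eq_sqrt: "x \<ge> 0 \<Longrightarrow> deriv psi x = - sqrt (2 * energy_w \<epsilon> (Nt x))"
  using deriv_psi_nonpos[of x] unfolding deriv_psi_sq[symmetric] by simp

lemma lyap_rate: "x > 0 \<Longrightarrow> deriv psi x + lyap_weight * psi2_w \<epsilon> (Nt x) + decay_rate * lyap x \<le> 0"
proof -
  assume x: "x > 0"
  define q where "q = sqrt (2 * energy_w \<epsilon> (Nt x))"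
  have "q \<ge> 0" unfolding q_def using energy_w_Nt_nonneg by simp
  have "lyap_weight * psi2_w \<epsilon> (Nt x) + decay_rate * psi_w \<epsilon> (Nt x) \<le> q"
    unfolding q_def using small Nt_nonneg Nt_le_S[OF small] energy_w_Nt_nonneg
    by (rule lyapunov_rate_bound)
  moreover have "deriv psi x + lyap_weight * psi2_w \<epsilon> (Nt x) + decay_rate * lyap x
     = - q * (1 + decay_rate * lyap_weight) + (lyap_weight * psi2_w \<epsilon> (Nt x) + decay_rate * psi_w \<epsilon> (Nt x))"
    unfolding lyap_def deriv_psi_eq_sqrt[OF less_imp_le[OF x]] psi_eq_psi_w q_def by (simp add: algebra_simps)
  moreover have "0 \<le> q * (decay_rate * lyap_weight)"
    using \<open>q \<ge> 0\<close> decay_rate_pos lyap_weight_pos by simp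
  ultimately show ?thesis by (simp add: algebra_simps)
qed

lemma lyap_decay: "x \<ge> 0 \<Longrightarrow> lyap x \<le> lyap 0 * exp (- decay_rate * x)"
proof -
  assume x: "x \<ge> 0"
  define M where "M y = lyap y * exp (decay_rate * y)" for y
  define M' where "M' y = (deriv psi y + lyap_weight * psi2_w \<epsilon> (Nt y) + decay_rate * lyap y)
    * exp (decay_rate * y)" for y
  have DM: "DERIV M y :> M' y" for y
  proof -
    have "DERIV lyap y :> deriv psi y + lyap_weight * psi2_w \<epsilon> (Nt y)"
      unfolding lyap_def[abs_def] by (intro DERIV_add DERIV_cmult DERIV_psi DERIV_deriv_psi)
    then have "DERIV M y :> (deriv psi y + lyap_weight * psi2_w \<epsilon> (Nt y)) * exp (decay_rate * y)
        + exp (decay_rate * y) * (decay_rate * 1) * lyap y"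
      unfolding M_def[abs_def]
      by (intro DERIV_mult DERIV_chain2[OF DERIV_exp DERIV_cmult[OF DERIV_ident]])
    then show ?thesis unfolding M'_def by (simp add: algebra_simps)
  qed
  have M'_nonpos: "M' y \<le> 0" if "y > 0" for y
    unfolding M'_def using lyap_rate[OF that] by (simp add: mult_nonpos_nonneg)
  have "M x \<le> M 0"
  proof (cases "x = 0")
    case False
    then obtain z where "0 < z" "z < x" "M x - M 0 = (x - 0) * M' z"
      using x MVT2[of 0 x M M'] DM by auto
    moreover have "(x - 0) * M' z \<le> 0" using M'_nonpos[of z] x \<open>0 < z\<close> by (simp add: mult_nonneg_nonpos)
    ultimately show ?thesis by simp
  qed simp
  then have "lyap x * exp (decay_rate * x) * exp (- decay_rate * x) \<le> lyap 0 * exp (- decay_rate * x)"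
    unfolding M_def by (intro mult_right_mono) auto
  then show ?thesis by (simp add: mult.assoc flip: exp_add)
qed

lemma Nt_decay: "x \<ge> 0 \<Longrightarrow> Nt x \<le> 11 / 5 * S * exp (- decay_rate * x)"
proof -
  assume x: "x \<ge> 0"
  have "Nt x / 2 \<le> lyap x"
    unfolding lyap_def psi_eq_psi_w deriv_psi_eq_sqrt[OF x]
    using psi_w_minus_sqrt_energy[OF small Nt_nonneg Nt_le_S[OF small]] by simp
  also have "\<dots> \<le> lyap 0 * exp (- decay_rate * x)" by (rule lyap_decay[OF x])
  also have "lyap 0 \<le> 11 / 10 * S"
    unfolding lyap_def deriv_psi_0 psi_eq_psi_w
    using psi_w_between[OF small Nt_nonneg Nt_le_S[OF small], of 0] Nt_le_S[OF small, of 0] by simp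
  then have "lyap 0 * exp (- decay_rate * x) \<le> 11 / 10 * S * exp (- decay_rate * x)"
    by (intro mult_right_mono) auto
  finally show ?thesis by simp
qed

end

definition inv_n :: "real \<Rightarrow> real" where "inv_n x = inverse (n x)"

definition dpsi_dNt :: "real \<Rightarrow> real" where
  "dpsi_dNt x = (speed \<epsilon>)\<^sup>2 * (inv_n x * inv_n x * inv_n x) - \<sigma> * inv_n x"

definition dNt_dpsi :: "real \<Rightarrow> real" where "dNt_dpsi x = inverse (dpsi_dNt x)"

definition Eexp :: "real \<Rightarrow> real" where "Eexp x = (exp (\<phi> x) - 1) / \<epsilon>"

text \<open>\<open>Kcoef\<close> is \<open>(dpsi_dNt - 1)/\<epsilon>\<close> written as a polynomial in \<open>Nt\<close> and \<open>inv_n\<close>, so that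
  it stays bounded as \<open>\<epsilon> \<rightarrow> 0\<close>.\<close>

definition Kcoef :: "real \<Rightarrow> real" where
  "Kcoef x = (2 * V * \<gamma> + \<gamma>\<^sup>2 * \<epsilon>) - (speed \<epsilon>)\<^sup>2 * (Nt x * inv_n x * (inv_n x * inv_n x + inv_n x + 1))
     + \<sigma> * (Nt x * inv_n x)"

lemma dpsi_dNt_eq_dPhi: "dpsi_dNt x = dPhi (speed \<epsilon>) \<sigma> (n x)"
  unfolding dpsi_dNt_def inv_n_def dPhi_def divide_inverse by (simp add: power3_eq_cube)

lemma dpsi_dNt_eq_dpsi_w: "dpsi_dNt x = dpsi_w \<epsilon> (Nt x)"
  unfolding dpsi_dNt_eq_dPhi dpsi_w_def n_eq_Nt[symmetric] ..

lemma dpsi_dNt_minus_one: "dpsi_dNt x - 1 = \<epsilon> * Kcoef x"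
proof -
  have identity: "(V + g * e)\<^sup>2 / N ^ 3 - (V\<^sup>2 - 1) / N - 1 = e * ((2 * V * g + g\<^sup>2 * e)
     - (V + g * e)\<^sup>2 * ((N - 1) / e * inverse N * (inverse N * inverse N + inverse N + 1))
     + (V\<^sup>2 - 1) * ((N - 1) / e * inverse N))" if "N > 0" "e \<noteq> 0" for g e N :: real
    using that by (simp add: field_simps power2_eq_square power3_eq_cube)
  have "\<sigma> = V\<^sup>2 - 1" using V_sq by simp
  then show ?thesis
    unfolding dpsi_dNt_eq_dPhi dPhi_def Kcoef_def Nt_def inv_n_def speed_def
    using identity[OF n_pos] eps_pos by simp
qed

lemma u_div_eps: "u x / \<epsilon> = speed \<epsilon> * (Nt x * inv_n x)"
  unfolding u_eq_density Nt_def inv_n_def using n_pos[of x] eps_pos by (simp add: field_simps)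

lemma smooth_fun_Nt: "smooth_fun Nt"
  unfolding Nt_def[abs_def] by (intro smooth_fun_divide_const smooth_fun_diff smooth_n smooth_fun_const)

lemma smooth_fun_psi: "smooth_fun psi"
  unfolding psi_def[abs_def] by (intro smooth_fun_divide_const smooth_phi)

lemma smooth_fun_inv_n: "smooth_fun inv_n"
  unfolding inv_n_def[abs_def] using n_pos by (intro smooth_fun_inverse smooth_n) (simp add: less_imp_neq[symmetric])

lemma smooth_fun_Eexp: "smooth_fun Eexp"
  unfolding Eexp_def[abs_def]
  by (intro smooth_fun_divide_const smooth_fun_diff smooth_fun_exp smooth_phi smooth_fun_const)

lemma smooth_fun_dpsi_dNt: "smooth_fun dpsi_dNt"
  unfolding dpsi_dNt_def[abs_def]
  by (intro smooth_fun_diff smooth_fun_cmult smooth_fun_mult smooth_fun_inv_n)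

lemma deriv_Nt: "deriv Nt x = deriv n x / \<epsilon>"
  unfolding Nt_def[abs_def] using DERIV_cdivide[OF DERIV_diff[OF DERIV_n DERIV_const]]
  by (intro DERIV_imp_deriv) simp

lemma deriv3_psi_eq: "(deriv ^^ 3) psi x = Eexp x * deriv psi x + deriv Nt x * Kcoef x"
proof -
  have "deriv (deriv psi) = (\<lambda>x. (exp (\<phi> x) - n x) / \<epsilon>\<^sup>2)" using deriv2_psi by (rule ext)
  then have "(deriv ^^ 3) psi x = deriv (\<lambda>x. (exp (\<phi> x) - n x) / \<epsilon>\<^sup>2) x" by (simp add: numeral_3_eq_3)
  also have "\<dots> = (exp (\<phi> x) * deriv \<phi> x - deriv n x) / \<epsilon>\<^sup>2"
    by (intro DERIV_imp_deriv DERIV_cdivide DERIV_diff DERIV_chain2[OF DERIV_exp DERIV_phi] DERIV_n)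
  also have "\<dots> = Eexp x * deriv psi x + deriv Nt x * Kcoef x"
  proof -
    have "exp (\<phi> x) = 1 + \<epsilon> * Eexp x" unfolding Eexp_def using eps_pos by simp
    moreover have "deriv \<phi> x = (1 + \<epsilon> * Kcoef x) * deriv n x"
      using deriv_phi_eq dpsi_dNt_minus_one[of x] unfolding dpsi_dNt_eq_dPhi by simp
    ultimately show ?thesis
      unfolding deriv_psi deriv_Nt using eps_pos by (simp add: field_simps power2_eq_square)
  qed
  finally show ?thesis .
qed

lemma deriv_Eexp_eq: "deriv Eexp x = (1 + \<epsilon> * Eexp x) * deriv psi x"
proof -
  have "deriv Eexp x = (exp (\<phi> x) * deriv \<phi> x - 0) / \<epsilon>"
    unfolding Eexp_def[abs_def]
    by (intro DERIV_imp_deriv DERIV_cdivide DERIV_diff DERIV_chain2[OF DERIV_exp DERIV_phi] DERIV_const)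
  moreover have "exp (\<phi> x) = 1 + \<epsilon> * Eexp x" unfolding Eexp_def using eps_pos by simp
  ultimately show ?thesis unfolding deriv_psi by simp
qed

lemma DERIV_inv_n: "DERIV inv_n x :> (- \<epsilon>) * (deriv Nt x * (inv_n x * inv_n x))"
proof -
  have "DERIV inv_n x :> - (deriv n x * inverse (n x ^ Suc (Suc 0)))"
    unfolding inv_n_def[abs_def] using n_pos[of x] by (intro DERIV_inverse_fun DERIV_n) simp
  moreover have "- (deriv n x * inverse (n x ^ Suc (Suc 0))) = (- \<epsilon>) * (deriv Nt x * (inv_n x * inv_n x))"
    unfolding deriv_Nt inv_n_def using eps_pos by (simp add: field_simps power2_eq_square)
  ultimately show ?thesis by simp
qed

lemma deriv_inv_n_eq: "deriv inv_n x = (- \<epsilon>) * (deriv Nt x * (inv_n x * inv_n x))"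
  using DERIV_inv_n by (rule DERIV_imp_deriv)

lemma inv_n_bound: "\<bar>inv_n x\<bar> \<le> 1"
proof -
  have "inverse (n x) \<le> inverse 1" using n_ge_1[of x] by (intro le_imp_inverse_le) auto
  moreover have "inverse (n x) > 0" using n_pos[of x] by simp
  ultimately show ?thesis unfolding inv_n_def by simp
qed

context
  assumes small: "small_eps \<epsilon>"
begin

lemma dpsi_dNt_ge: "dpsi_dNt x \<ge> 9 / 10"
  using dpsi_w_approx[OF small_epsD(1,2)[OF small] Nt_nonneg[of x] Nt_le_S[OF small, of x]]
    small_epsD(4)[OF small]
  unfolding dpsi_dNt_eq_dpsi_w by (simp add: abs_le_iff)

lemma dpsi_dNt_nonzero: "dpsi_dNt x \<noteq> 0"
  using dpsi_dNt_ge[of x] by linarith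

lemma smooth_fun_dNt_dpsi: "smooth_fun dNt_dpsi"
  unfolding dNt_dpsi_def[abs_def] by (intro smooth_fun_inverse smooth_fun_dpsi_dNt dpsi_dNt_nonzero)

lemma deriv_Nt_eq: "deriv Nt x = deriv psi x * dNt_dpsi x"
  unfolding deriv_psi deriv_phi_eq dNt_dpsi_def dpsi_dNt_eq_dPhi[symmetric] deriv_Nt
  using dpsi_dNt_nonzero[of x] by (simp add: field_simps)

lemma deriv_dNt_dpsi_eq:
  "deriv dNt_dpsi x = \<epsilon> * ((3 * (speed \<epsilon>)\<^sup>2 * (inv_n x * inv_n x) - \<sigma>)
     * (deriv Nt x * (inv_n x * inv_n x * (dNt_dpsi x * dNt_dpsi x))))"
proof -
  define d where "d = (- \<epsilon>) * (deriv Nt x * (inv_n x * inv_n x))"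
  have "DERIV dpsi_dNt x :> (speed \<epsilon>)\<^sup>2 * ((d * inv_n x + d * inv_n x) * inv_n x + d * (inv_n x * inv_n x))
      - \<sigma> * d"
    unfolding dpsi_dNt_def[abs_def] d_def by (intro DERIV_diff DERIV_cmult DERIV_mult DERIV_inv_n)
  then have "DERIV dNt_dpsi x :> - (((speed \<epsilon>)\<^sup>2 * ((d * inv_n x + d * inv_n x) * inv_n x
      + d * (inv_n x * inv_n x)) - \<sigma> * d) * inverse (dpsi_dNt x ^ Suc (Suc 0)))"
    unfolding dNt_dpsi_def[abs_def] using dpsi_dNt_nonzero by (rule DERIV_inverse_fun)
  moreover have "- (((speed \<epsilon>)\<^sup>2 * ((d * inv_n x + d * inv_n x) * inv_n x + d * (inv_n x * inv_n x))
      - \<sigma> * d) * inverse (dpsi_dNt x ^ Suc (Suc 0)))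
    = \<epsilon> * ((3 * (speed \<epsilon>)\<^sup>2 * (inv_n x * inv_n x) - \<sigma>)
      * (deriv Nt x * (inv_n x * inv_n x * (dNt_dpsi x * dNt_dpsi x))))"
    unfolding d_def dNt_dpsi_def using dpsi_dNt_nonzero[of x] by (simp add: field_simps power2_eq_square)
  ultimately show ?thesis by (simp add: DERIV_imp_deriv)
qed

lemma dNt_dpsi_bound: "\<bar>dNt_dpsi x\<bar> \<le> 10 / 9"
proof -
  have "inverse (dpsi_dNt x) \<le> inverse (9 / 10)" using dpsi_dNt_ge[of x] by (intro le_imp_inverse_le) auto
  moreover have "inverse (dpsi_dNt x) > 0" using dpsi_dNt_ge[of x] by simp
  ultimately show ?thesis unfolding dNt_dpsi_def by simp
qed

lemma Nt_decay_abs: "x \<ge> 0 \<Longrightarrow> \<bar>Nt x\<bar> \<le> 11 / 5 * S * exp (- decay_rate * x)"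
  using Nt_decay[OF small] Nt_nonneg by simp

lemma psi_le_Nt: "\<bar>psi x\<bar> \<le> 11 / 10 * Nt x"
  using psi_w_between[OF small Nt_nonneg Nt_le_S[OF small], of x] Nt_nonneg[of x]
  unfolding psi_eq_psi_w by simp

lemma psi_decay: "x \<ge> 0 \<Longrightarrow> \<bar>psi x\<bar> \<le> (11 / 10 * (11 / 5 * S)) * exp (- decay_rate * x)"
  using psi_le_Nt[of x] Nt_decay[OF small, of x] by simp

lemma deriv_psi_decay:
  "x \<ge> 0 \<Longrightarrow> \<bar>deriv psi x\<bar> \<le> (11 / 10 * kdv_rate * (11 / 5 * S)) * exp (- decay_rate * x)"
proof -
  assume x: "x \<ge> 0"
  have "\<bar>deriv psi x\<bar> = sqrt (2 * energy_w \<epsilon> (Nt x))"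
    unfolding deriv_psi_eq_sqrt[OF small x] using energy_w_Nt_nonneg[OF small] by simp
  also have "\<dots> \<le> 11 / 10 * kdv_rate * Nt x" using sqrt_energy_w_le[OF small Nt_nonneg Nt_le_S[OF small]] .
  also have "\<dots> \<le> 11 / 10 * kdv_rate * (11 / 5 * S * exp (- decay_rate * x))"
    using Nt_decay[OF small x] kdv_rate_pos by (intro mult_left_mono) auto
  finally show ?thesis by simp
qed

lemma deriv2_psi_decay:
  "x \<ge> 0 \<Longrightarrow> \<bar>deriv (deriv psi) x\<bar> \<le> (C_psi2 * (11 / 5 * S)) * exp (- decay_rate * x)"
proof -
  assume x: "x \<ge> 0"
  have "C_psi2 \<ge> 0" unfolding C_psi2_def using V_ge_1 gamma_pos A_psi2_pos S_pos by simp
  have "\<bar>deriv (deriv psi) x\<bar> \<le> C_psi2 * Nt x"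
    unfolding deriv2_psi_eq_psi2_w using small_epsD[OF small] Nt_nonneg Nt_le_S[OF small]
    by (intro psi2_w_bound) auto
  also have "\<dots> \<le> C_psi2 * (11 / 5 * S * exp (- decay_rate * x))"
    using Nt_decay[OF small x] \<open>C_psi2 \<ge> 0\<close> by (intro mult_left_mono) auto
  finally show ?thesis by simp
qed

lemma Eexp_decay: "x \<ge> 0 \<Longrightarrow> \<bar>Eexp x\<bar> \<le> (33 / 10 * (11 / 5 * S)) * exp (- decay_rate * x)"
proof -
  assume x: "x \<ge> 0"
  have "\<bar>psi x\<bar> \<le> B_psi"
    unfolding psi_eq_psi_w using small_epsD[OF small] Nt_nonneg Nt_le_S[OF small] by (intro psi_w_bound) auto
  then have "\<bar>\<epsilon> * psi x\<bar> \<le> \<epsilon> * B_psi" using eps_pos by (simp add: abs_mult mult_left_mono)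
  then have "\<bar>\<epsilon> * psi x\<bar> \<le> 1" using small_epsD(3)[OF small] by simp
  moreover have "\<phi> x = \<epsilon> * psi x" unfolding psi_def using eps_pos by simp
  ultimately have "\<bar>exp (\<phi> x) - 1\<bar> \<le> 3 * \<bar>\<epsilon> * psi x\<bar>" using abs_exp_minus_one_le by simp
  then have "\<bar>Eexp x\<bar> \<le> 3 * \<bar>psi x\<bar>"
    unfolding Eexp_def using eps_pos by (simp add: abs_mult field_simps)
  then show ?thesis using psi_decay[OF x] by simp
qed

end

end

section \<open>Uniform decay of all derivatives\<close>

text \<open>A wave is the tuple \<open>(\<epsilon>, n, u, \<phi>)\<close>; constants independent of \<open>\<epsilon>\<close> and of the solution
  are obtained as bounds that are uniform over the set \<open>waves\<close>.\<close>

type_synonym wave = "real \<times> (real \<Rightarrow> real) \<times> (real \<Rightarrow> real) \<times> (real \<Rightarrow> real)"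

context wave_params
begin

definition waves :: "wave set" where
  "waves = {(e, n, u, \<phi>). small_eps e \<and> solitary_wave \<sigma> \<gamma> e n u \<phi>}"

definition fam_Nt :: "wave \<Rightarrow> real \<Rightarrow> real" where
  "fam_Nt p = (case p of (e, n, u, \<phi>) \<Rightarrow> soliton.Nt e n)"

definition fam_psi :: "wave \<Rightarrow> real \<Rightarrow> real" where
  "fam_psi p = (case p of (e, n, u, \<phi>) \<Rightarrow> soliton.psi e \<phi>)"

definition fam_Eexp :: "wave \<Rightarrow> real \<Rightarrow> real" where
  "fam_Eexp p = (case p of (e, n, u, \<phi>) \<Rightarrow> soliton.Eexp e \<phi>)"

definition fam_inv_n :: "wave \<Rightarrow> real \<Rightarrow> real" where
  "fam_inv_n p = (case p of (e, n, u, \<phi>) \<Rightarrow> soliton.inv_n n)"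

definition fam_dNt_dpsi :: "wave \<Rightarrow> real \<Rightarrow> real" where
  "fam_dNt_dpsi p = (case p of (e, n, u, \<phi>) \<Rightarrow> soliton.dNt_dpsi \<sigma> \<gamma> e n)"

definition fam_Kcoef :: "wave \<Rightarrow> real \<Rightarrow> real" where
  "fam_Kcoef p = (case p of (e, n, u, \<phi>) \<Rightarrow> soliton.Kcoef \<sigma> \<gamma> e n)"

definition fam_E :: "wave \<Rightarrow> real \<Rightarrow> real" where
  "fam_E p = (case p of (e, n, u, \<phi>) \<Rightarrow> (\<lambda>x. - deriv \<phi> x / e))"

definition fam_u :: "wave \<Rightarrow> real \<Rightarrow> real" where
  "fam_u p = (case p of (e, n, u, \<phi>) \<Rightarrow> (\<lambda>x. u x / e))"

lemma wavesE:
  assumes "p \<in> waves"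
  obtains e n u \<phi> where "p = (e, n, u, \<phi>)" "small_eps e" "soliton \<sigma> \<gamma> e n u \<phi>"
proof -
  obtain e n u \<phi> where p: "p = (e, n, u, \<phi>)" by (cases p) blast
  with assms have "small_eps e" "solitary_wave \<sigma> \<gamma> e n u \<phi>" unfolding waves_def by auto
  moreover from this have "soliton \<sigma> \<gamma> e n u \<phi>"
    using sigma_nonneg gamma_pos small_epsD(1) by unfold_locales auto
  ultimately show thesis using p that by blast
qed

lemma waves_eps: "p \<in> waves \<Longrightarrow> 0 < fst p \<and> fst p \<le> 1"
  by (metis wavesE small_epsD(1,2) fst_conv)

lemma waves_smooth:
  assumes "p \<in> waves"
  shows "smooth_fun (fam_Nt p)" "smooth_fun (fam_psi p)" "smooth_fun (fam_Eexp p)"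
    "smooth_fun (fam_inv_n p)" "smooth_fun (fam_dNt_dpsi p)"
proof -
  obtain e n u \<phi> where p: "p = (e, n, u, \<phi>)" and small: "small_eps e" and "soliton \<sigma> \<gamma> e n u \<phi>"
    using wavesE[OF assms] by blast
  interpret I: soliton \<sigma> \<gamma> e n u \<phi> by fact
  show "smooth_fun (fam_Nt p)" "smooth_fun (fam_psi p)" "smooth_fun (fam_Eexp p)"
    "smooth_fun (fam_inv_n p)" "smooth_fun (fam_dNt_dpsi p)"
    unfolding p fam_Nt_def fam_psi_def fam_Eexp_def fam_inv_n_def fam_dNt_dpsi_def
    using I.smooth_fun_Nt I.smooth_fun_psi I.smooth_fun_Eexp I.smooth_fun_inv_n
      I.smooth_fun_dNt_dpsi[OF small] by simp_all
qed

lemma waves_ode: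
  assumes "p \<in> waves"
  shows "deriv (fam_Nt p) x = deriv (fam_psi p) x * fam_dNt_dpsi p x"
    and "(deriv ^^ 3) (fam_psi p) x = fam_Eexp p x * deriv (fam_psi p) x + deriv (fam_Nt p) x * fam_Kcoef p x"
    and "deriv (fam_Eexp p) x = (1 + fst p * fam_Eexp p x) * deriv (fam_psi p) x"
    and "deriv (fam_inv_n p) x = (- fst p) * (deriv (fam_Nt p) x * (fam_inv_n p x * fam_inv_n p x))"
    and "deriv (fam_dNt_dpsi p) x = fst p * ((3 * (speed (fst p))\<^sup>2 * (fam_inv_n p x * fam_inv_n p x) - \<sigma>)
           * (deriv (fam_Nt p) x * (fam_inv_n p x * fam_inv_n p x * (fam_dNt_dpsi p x * fam_dNt_dpsi p x))))"
    and "fam_Kcoef p x = (2 * V * \<gamma> + \<gamma>\<^sup>2 * fst p)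
           - (speed (fst p))\<^sup>2 * (fam_Nt p x * fam_inv_n p x * (fam_inv_n p x * fam_inv_n p x + fam_inv_n p x + 1))
           + \<sigma> * (fam_Nt p x * fam_inv_n p x)"
    and "fam_E p x = - deriv (fam_psi p) x"
    and "fam_u p x = speed (fst p) * (fam_Nt p x * fam_inv_n p x)"
proof -
  obtain e n u \<phi> where p: "p = (e, n, u, \<phi>)" and small: "small_eps e" and "soliton \<sigma> \<gamma> e n u \<phi>"
    using wavesE[OF assms] by blast
  interpret I: soliton \<sigma> \<gamma> e n u \<phi> by fact
  note defs = p fam_Nt_def fam_psi_def fam_Eexp_def fam_inv_n_def fam_dNt_dpsi_def fam_Kcoef_def
    fam_E_def fam_u_def prod.case fst_conv
  show "deriv (fam_Nt p) x = deriv (fam_psi p) x * fam_dNt_dpsi p x"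
    unfolding defs by (rule I.deriv_Nt_eq[OF small])
  show "(deriv ^^ 3) (fam_psi p) x = fam_Eexp p x * deriv (fam_psi p) x + deriv (fam_Nt p) x * fam_Kcoef p x"
    unfolding defs by (rule I.deriv3_psi_eq)
  show "deriv (fam_Eexp p) x = (1 + fst p * fam_Eexp p x) * deriv (fam_psi p) x"
    unfolding defs by (rule I.deriv_Eexp_eq)
  show "deriv (fam_inv_n p) x = (- fst p) * (deriv (fam_Nt p) x * (fam_inv_n p x * fam_inv_n p x))"
    unfolding defs by (rule I.deriv_inv_n_eq)
  show "deriv (fam_dNt_dpsi p) x = fst p * ((3 * (speed (fst p))\<^sup>2 * (fam_inv_n p x * fam_inv_n p x) - \<sigma>)
      * (deriv (fam_Nt p) x * (fam_inv_n p x * fam_inv_n p x * (fam_dNt_dpsi p x * fam_dNt_dpsi p x))))"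
    unfolding defs by (rule I.deriv_dNt_dpsi_eq[OF small])
  show "fam_Kcoef p x = (2 * V * \<gamma> + \<gamma>\<^sup>2 * fst p)
      - (speed (fst p))\<^sup>2 * (fam_Nt p x * fam_inv_n p x * (fam_inv_n p x * fam_inv_n p x + fam_inv_n p x + 1))
      + \<sigma> * (fam_Nt p x * fam_inv_n p x)"
    unfolding defs by (rule I.Kcoef_def)
  show "fam_E p x = - deriv (fam_psi p) x"
    unfolding defs I.deriv_psi by simp
  show "fam_u p x = speed (fst p) * (fam_Nt p x * fam_inv_n p x)"
    unfolding defs by (rule I.u_div_eps)
qed

lemma waves_base_bounds:
  assumes "p \<in> waves" "x \<ge> 0"
  shows "\<bar>fam_Nt p x\<bar> \<le> (11 / 5 * S) * exp (- decay_rate * x)"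
    and "\<bar>fam_psi p x\<bar> \<le> (11 / 10 * (11 / 5 * S)) * exp (- decay_rate * x)"
    and "\<bar>deriv (fam_psi p) x\<bar> \<le> (11 / 10 * kdv_rate * (11 / 5 * S)) * exp (- decay_rate * x)"
    and "\<bar>deriv (deriv (fam_psi p)) x\<bar> \<le> (C_psi2 * (11 / 5 * S)) * exp (- decay_rate * x)"
    and "\<bar>fam_Eexp p x\<bar> \<le> (33 / 10 * (11 / 5 * S)) * exp (- decay_rate * x)"
    and "\<bar>fam_inv_n p x\<bar> \<le> 1"
    and "\<bar>fam_dNt_dpsi p x\<bar> \<le> 10 / 9"
proof -
  obtain e n u \<phi> where p: "p = (e, n, u, \<phi>)" and small: "small_eps e" and "soliton \<sigma> \<gamma> e n u \<phi>"
    using wavesE[OF assms(1)] by blast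
  interpret I: soliton \<sigma> \<gamma> e n u \<phi> by fact
  note defs = p fam_Nt_def fam_psi_def fam_Eexp_def fam_inv_n_def fam_dNt_dpsi_def prod.case
  show "\<bar>fam_Nt p x\<bar> \<le> (11 / 5 * S) * exp (- decay_rate * x)"
    unfolding defs by (rule I.Nt_decay_abs[OF small assms(2)])
  show "\<bar>fam_psi p x\<bar> \<le> (11 / 10 * (11 / 5 * S)) * exp (- decay_rate * x)"
    unfolding defs by (rule I.psi_decay[OF small assms(2)])
  show "\<bar>deriv (fam_psi p) x\<bar> \<le> (11 / 10 * kdv_rate * (11 / 5 * S)) * exp (- decay_rate * x)"
    unfolding defs by (rule I.deriv_psi_decay[OF small assms(2)])
  show "\<bar>deriv (deriv (fam_psi p)) x\<bar> \<le> (C_psi2 * (11 / 5 * S)) * exp (- decay_rate * x)"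
    unfolding defs by (rule I.deriv2_psi_decay[OF small assms(2)])
  show "\<bar>fam_Eexp p x\<bar> \<le> (33 / 10 * (11 / 5 * S)) * exp (- decay_rate * x)"
    unfolding defs by (rule I.Eexp_decay[OF small assms(2)])
  show "\<bar>fam_inv_n p x\<bar> \<le> 1"
    unfolding defs by (rule I.inv_n_bound)
  show "\<bar>fam_dNt_dpsi p x\<bar> \<le> 10 / 9"
    unfolding defs by (rule I.dNt_dpsi_bound[OF small])
qed

lemma smooth_family_waves:
  "smooth_family waves fam_Nt" "smooth_family waves fam_psi" "smooth_family waves fam_Eexp"
  "smooth_family waves fam_inv_n" "smooth_family waves fam_dNt_dpsi"
  unfolding smooth_family_def using waves_smooth by auto

lemma waves_coeff_bounds:
  assumes "p \<in> waves"
  shows "\<bar>fst p\<bar> \<le> 1" "\<bar>- fst p\<bar> \<le> 1" "\<bar>2 * V * \<gamma> + \<gamma>\<^sup>2 * fst p\<bar> \<le> 2 * V * \<gamma> + \<gamma>\<^sup>2"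
    "\<bar>- (speed (fst p))\<^sup>2\<bar> \<le> (V + \<gamma>)\<^sup>2" "\<bar>speed (fst p)\<bar> \<le> V + \<gamma>"
    "\<bar>fst p * 3 * (speed (fst p))\<^sup>2\<bar> \<le> 3 * (V + \<gamma>)\<^sup>2" "\<bar>- (fst p * \<sigma>)\<bar> \<le> \<sigma>"
proof -
  have e: "0 < fst p" "fst p \<le> 1" using waves_eps[OF assms] by auto
  then have c: "0 \<le> speed (fst p)" "speed (fst p) \<le> V + \<gamma>" using speed_bounds by auto
  then have c2: "(speed (fst p))\<^sup>2 \<le> (V + \<gamma>)\<^sup>2" by (simp add: power_mono)
  show "\<bar>fst p\<bar> \<le> 1" "\<bar>- fst p\<bar> \<le> 1" "\<bar>- (speed (fst p))\<^sup>2\<bar> \<le> (V + \<gamma>)\<^sup>2" "\<bar>speed (fst p)\<bar> \<le> V + \<gamma>"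
    using e c c2 by auto
  show "\<bar>2 * V * \<gamma> + \<gamma>\<^sup>2 * fst p\<bar> \<le> 2 * V * \<gamma> + \<gamma>\<^sup>2"
    using e V_ge_1 gamma_pos mult_left_le[of "fst p" "\<gamma>\<^sup>2"] by simp
  have "fst p * (speed (fst p))\<^sup>2 \<le> 1 * (V + \<gamma>)\<^sup>2" using e c2 by (intro mult_mono) auto
  then show "\<bar>fst p * 3 * (speed (fst p))\<^sup>2\<bar> \<le> 3 * (V + \<gamma>)\<^sup>2" using e by (simp add: abs_mult)
  show "\<bar>- (fst p * \<sigma>)\<bar> \<le> \<sigma>" using e sigma_nonneg mult_left_le_one_le[of \<sigma> "fst p"] by simp
qed

lemma uniform_decay_upto_Kcoef:
  assumes Nt: "uniform_decay_upto waves fam_Nt decay_rate m"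
    and inv: "uniform_decay_upto waves fam_inv_n 0 m"
  shows "uniform_decay_upto waves fam_Kcoef 0 m"
proof -
  have Nt0: "uniform_decay_upto waves fam_Nt 0 m"
    using decay_rate_pos by (intro uniform_decay_upto_mono[OF _ Nt]) simp
  have one: "uniform_decay_upto waves (\<lambda>p x. 1) 0 m"
    by (rule uniform_decay_upto_const[where M = 1]) simp
  have inv2: "uniform_decay_upto waves (\<lambda>p x. fam_inv_n p x * fam_inv_n p x) 0 m"
    using inv inv by (rule uniform_decay_upto_mult) simp
  have Nt_inv: "uniform_decay_upto waves (\<lambda>p x. fam_Nt p x * fam_inv_n p x) 0 m"
    using Nt0 inv by (rule uniform_decay_upto_mult) simp
  have "uniform_decay_upto waves (\<lambda>p x. fam_inv_n p x * fam_inv_n p x + fam_inv_n p x + 1) 0 m"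
    using uniform_decay_upto_add[OF inv2 inv] one by (rule uniform_decay_upto_add)
  with Nt_inv have "uniform_decay_upto waves
      (\<lambda>p x. fam_Nt p x * fam_inv_n p x * (fam_inv_n p x * fam_inv_n p x + fam_inv_n p x + 1)) 0 m"
    by (rule uniform_decay_upto_mult) simp
  then have "uniform_decay_upto waves (\<lambda>p x. (- (speed (fst p))\<^sup>2)
      * (fam_Nt p x * fam_inv_n p x * (fam_inv_n p x * fam_inv_n p x + fam_inv_n p x + 1))) 0 m"
    using waves_coeff_bounds(4) by (rule uniform_decay_upto_cmult)
  with uniform_decay_upto_const[OF waves_coeff_bounds(3)]
  have "uniform_decay_upto waves (\<lambda>p x. (2 * V * \<gamma> + \<gamma>\<^sup>2 * fst p) + (- (speed (fst p))\<^sup>2)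
      * (fam_Nt p x * fam_inv_n p x * (fam_inv_n p x * fam_inv_n p x + fam_inv_n p x + 1))) 0 m"
    by (rule uniform_decay_upto_add)
  moreover have "uniform_decay_upto waves (\<lambda>p x. \<sigma> * (fam_Nt p x * fam_inv_n p x)) 0 m"
    using Nt_inv by (rule uniform_decay_upto_cmult[where M = \<sigma>]) (use sigma_nonneg in simp)
  ultimately have "uniform_decay_upto waves (\<lambda>p x. (2 * V * \<gamma> + \<gamma>\<^sup>2 * fst p) + (- (speed (fst p))\<^sup>2)
      * (fam_Nt p x * fam_inv_n p x * (fam_inv_n p x * fam_inv_n p x + fam_inv_n p x + 1))
      + \<sigma> * (fam_Nt p x * fam_inv_n p x)) 0 m"
    by (rule uniform_decay_upto_add)
  moreover have "uniform_decay_upto waves fam_Kcoef 0 m = uniform_decay_upto waves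
      (\<lambda>p x. (2 * V * \<gamma> + \<gamma>\<^sup>2 * fst p) + (- (speed (fst p))\<^sup>2)
      * (fam_Nt p x * fam_inv_n p x * (fam_inv_n p x * fam_inv_n p x + fam_inv_n p x + 1))
      + \<sigma> * (fam_Nt p x * fam_inv_n p x)) 0 m"
    by (rule uniform_decay_upto_cong) (simp add: waves_ode(6))
  ultimately show ?thesis by simp
qed

definition waves_decay_upto :: "nat \<Rightarrow> bool" where
  "waves_decay_upto m \<longleftrightarrow>
     uniform_decay_upto waves fam_Nt decay_rate m \<and> uniform_decay_upto waves fam_psi decay_rate m \<and>
     uniform_decay_upto waves fam_Eexp decay_rate m \<and> uniform_decay_upto waves fam_inv_n 0 m \<and>
     uniform_decay_upto waves fam_dNt_dpsi 0 m"

lemma waves_decay_upto_0: "waves_decay_upto 0"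
proof -
  have "uniform_decay waves fam_Nt decay_rate 0"
    by (rule uniform_decay_0I, rule waves_base_bounds(1))
  moreover have "uniform_decay waves fam_psi decay_rate 0"
    by (rule uniform_decay_0I, rule waves_base_bounds(2))
  moreover have "uniform_decay waves fam_Eexp decay_rate 0"
    by (rule uniform_decay_0I, rule waves_base_bounds(5))
  moreover have "uniform_decay waves fam_inv_n 0 0"
  proof (rule uniform_decay_0I[where C = 1])
    fix p and x :: real assume "p \<in> waves" "0 \<le> x"
    then show "\<bar>fam_inv_n p x\<bar> \<le> 1 * exp (- 0 * x)" using waves_base_bounds(6) by simp
  qed
  moreover have "uniform_decay waves fam_dNt_dpsi 0 0"
  proof (rule uniform_decay_0I[where C = "10 / 9"])
    fix p and x :: real assume "p \<in> waves" "0 \<le> x"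
    then show "\<bar>fam_dNt_dpsi p x\<bar> \<le> 10 / 9 * exp (- 0 * x)" using waves_base_bounds(7) by simp
  qed
  ultimately show ?thesis
    unfolding waves_decay_upto_def uniform_decay_upto_0 using smooth_family_waves by blast
qed

lemma uniform_decay_psi_deriv3:
  assumes Nt: "uniform_decay_upto waves fam_Nt decay_rate (Suc (Suc j))"
    and psi: "uniform_decay_upto waves fam_psi decay_rate (Suc (Suc j))"
    and E: "uniform_decay_upto waves fam_Eexp decay_rate j"
    and inv: "uniform_decay_upto waves fam_inv_n 0 j"
  shows "uniform_decay waves fam_psi decay_rate (j + 3)"
proof -
  have dpsi: "uniform_decay_upto waves (\<lambda>p. deriv (fam_psi p)) decay_rate j"
    using uniform_decay_upto_deriv[OF psi] by (rule uniform_decay_upto_le) simp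
  have dNt: "uniform_decay_upto waves (\<lambda>p. deriv (fam_Nt p)) decay_rate j"
    using uniform_decay_upto_deriv[OF Nt] by (rule uniform_decay_upto_le) simp
  have K: "uniform_decay_upto waves fam_Kcoef 0 j"
    using uniform_decay_upto_le[OF Nt] inv by (intro uniform_decay_upto_Kcoef) auto
  have "uniform_decay_upto waves (\<lambda>p x. fam_Eexp p x * deriv (fam_psi p) x
      + deriv (fam_Nt p) x * fam_Kcoef p x) decay_rate j"
    using decay_rate_pos
    by (intro uniform_decay_upto_add uniform_decay_upto_mult[OF E dpsi] uniform_decay_upto_mult[OF dNt K])
      simp_all
  then have "uniform_decay waves (\<lambda>p x. fam_Eexp p x * deriv (fam_psi p) x
      + deriv (fam_Nt p) x * fam_Kcoef p x) decay_rate j"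
    by (rule uniform_decay_uptoD) simp
  then have "uniform_decay waves (\<lambda>p. (deriv ^^ 3) (fam_psi p)) decay_rate j"
    by (subst uniform_decay_cong[OF waves_ode(2)])
  then show ?thesis by (rule uniform_decay_higher_deriv[THEN iffD1])
qed

lemma uniform_decay_psi_Suc:
  assumes "waves_decay_upto m"
  shows "uniform_decay waves fam_psi decay_rate (Suc m)"
proof -
  consider "m = 0" | "m = 1" | j where "m = Suc (Suc j)" by (metis One_nat_def not0_implies_Suc)
  then show ?thesis
  proof cases
    case 1
    have "uniform_decay waves (\<lambda>p. deriv (fam_psi p)) decay_rate 0"
      by (rule uniform_decay_0I, rule waves_base_bounds(3))
    then show ?thesis using 1 by (simp add: uniform_decay_deriv)
  next
    case 2
    have "uniform_decay waves (\<lambda>p. deriv (deriv (fam_psi p))) decay_rate 0"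
      by (rule uniform_decay_0I, rule waves_base_bounds(4))
    then show ?thesis using 2 by (simp add: uniform_decay_deriv)
  next
    case 3
    with assms have "uniform_decay waves fam_psi decay_rate (j + 3)"
      unfolding waves_decay_upto_def
      by (intro uniform_decay_psi_deriv3) (auto intro: uniform_decay_upto_le)
    then show ?thesis using 3 by (simp add: numeral_3_eq_3)
  qed
qed

lemma uniform_decay_Nt_Suc:
  assumes "uniform_decay_upto waves fam_psi decay_rate (Suc m)"
    and "uniform_decay_upto waves fam_dNt_dpsi 0 m"
  shows "uniform_decay waves fam_Nt decay_rate (Suc m)"
proof -
  have "uniform_decay_upto waves (\<lambda>p x. deriv (fam_psi p) x * fam_dNt_dpsi p x) decay_rate m"
    using uniform_decay_upto_deriv[OF assms(1)] assms(2) by (rule uniform_decay_upto_mult) simp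
  then have "uniform_decay waves (\<lambda>p x. deriv (fam_psi p) x * fam_dNt_dpsi p x) decay_rate m"
    by (rule uniform_decay_uptoD) simp
  then have "uniform_decay waves (\<lambda>p. deriv (fam_Nt p)) decay_rate m"
    by (subst uniform_decay_cong[OF waves_ode(1)])
  then show ?thesis by (rule uniform_decay_deriv[THEN iffD1])
qed

lemma uniform_decay_Eexp_Suc:
  assumes E: "uniform_decay_upto waves fam_Eexp decay_rate m"
    and psi: "uniform_decay_upto waves fam_psi decay_rate (Suc m)"
  shows "uniform_decay waves fam_Eexp decay_rate (Suc m)"
proof -
  have "uniform_decay_upto waves (\<lambda>p x. fst p * fam_Eexp p x) 0 m"
    using decay_rate_pos waves_coeff_bounds(1)
    by (intro uniform_decay_upto_cmult uniform_decay_upto_mono[OF _ E]) auto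
  with uniform_decay_upto_const[of waves "\<lambda>p. 1" 1]
  have "uniform_decay_upto waves (\<lambda>p x. 1 + fst p * fam_Eexp p x) 0 m"
    by (intro uniform_decay_upto_add) auto
  then have "uniform_decay_upto waves (\<lambda>p x. (1 + fst p * fam_Eexp p x) * deriv (fam_psi p) x) decay_rate m"
    using uniform_decay_upto_deriv[OF psi] by (rule uniform_decay_upto_mult) simp
  then have "uniform_decay waves (\<lambda>p x. (1 + fst p * fam_Eexp p x) * deriv (fam_psi p) x) decay_rate m"
    by (rule uniform_decay_uptoD) simp
  then have "uniform_decay waves (\<lambda>p. deriv (fam_Eexp p)) decay_rate m"
    by (subst uniform_decay_cong[OF waves_ode(3)])
  then show ?thesis by (rule uniform_decay_deriv[THEN iffD1])
qed

lemma uniform_decay_inv_n_Suc: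
  assumes inv: "uniform_decay_upto waves fam_inv_n 0 m"
    and Nt: "uniform_decay_upto waves fam_Nt decay_rate (Suc m)"
  shows "uniform_decay waves fam_inv_n 0 (Suc m)"
proof -
  have "uniform_decay_upto waves (\<lambda>p x. fam_inv_n p x * fam_inv_n p x) 0 m"
    using inv inv by (rule uniform_decay_upto_mult) simp
  with uniform_decay_upto_deriv[OF Nt]
  have "uniform_decay_upto waves (\<lambda>p x. deriv (fam_Nt p) x * (fam_inv_n p x * fam_inv_n p x)) 0 m"
    by (rule uniform_decay_upto_mult) (use decay_rate_pos in simp)
  then have "uniform_decay_upto waves
      (\<lambda>p x. (- fst p) * (deriv (fam_Nt p) x * (fam_inv_n p x * fam_inv_n p x))) 0 m"
    using waves_coeff_bounds(2) by (rule uniform_decay_upto_cmult)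
  then have "uniform_decay waves
      (\<lambda>p x. (- fst p) * (deriv (fam_Nt p) x * (fam_inv_n p x * fam_inv_n p x))) 0 m"
    by (rule uniform_decay_uptoD) simp
  then have "uniform_decay waves (\<lambda>p. deriv (fam_inv_n p)) 0 m"
    by (subst uniform_decay_cong[OF waves_ode(4)])
  then show ?thesis by (rule uniform_decay_deriv[THEN iffD1])
qed

lemma uniform_decay_dNt_dpsi_Suc:
  assumes inv: "uniform_decay_upto waves fam_inv_n 0 m"
    and Z: "uniform_decay_upto waves fam_dNt_dpsi 0 m"
    and Nt: "uniform_decay_upto waves fam_Nt decay_rate (Suc m)"
  shows "uniform_decay waves fam_dNt_dpsi 0 (Suc m)"
proof -
  have inv2: "uniform_decay_upto waves (\<lambda>p x. fam_inv_n p x * fam_inv_n p x) 0 m"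
    using inv inv by (rule uniform_decay_upto_mult) simp
  have "uniform_decay_upto waves (\<lambda>p x. fam_dNt_dpsi p x * fam_dNt_dpsi p x) 0 m"
    using Z Z by (rule uniform_decay_upto_mult) simp
  with inv2 have "uniform_decay_upto waves
      (\<lambda>p x. fam_inv_n p x * fam_inv_n p x * (fam_dNt_dpsi p x * fam_dNt_dpsi p x)) 0 m"
    by (rule uniform_decay_upto_mult) simp
  with uniform_decay_upto_deriv[OF Nt] have right: "uniform_decay_upto waves
      (\<lambda>p x. deriv (fam_Nt p) x * (fam_inv_n p x * fam_inv_n p x * (fam_dNt_dpsi p x * fam_dNt_dpsi p x))) 0 m"
    by (rule uniform_decay_upto_mult) (use decay_rate_pos in simp)
  have "uniform_decay_upto waves (\<lambda>p x. (fst p * 3 * (speed (fst p))\<^sup>2) * (fam_inv_n p x * fam_inv_n p x)) 0 m"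
    using inv2 waves_coeff_bounds(6) by (rule uniform_decay_upto_cmult)
  with uniform_decay_upto_const[OF waves_coeff_bounds(7)] have left: "uniform_decay_upto waves
      (\<lambda>p x. (fst p * 3 * (speed (fst p))\<^sup>2) * (fam_inv_n p x * fam_inv_n p x) + (- (fst p * \<sigma>))) 0 m"
    by (intro uniform_decay_upto_add) auto
  have "uniform_decay waves
      (\<lambda>p x. ((fst p * 3 * (speed (fst p))\<^sup>2) * (fam_inv_n p x * fam_inv_n p x) + (- (fst p * \<sigma>)))
        * (deriv (fam_Nt p) x * (fam_inv_n p x * fam_inv_n p x * (fam_dNt_dpsi p x * fam_dNt_dpsi p x)))) 0 m"
    using uniform_decay_upto_mult[OF left right] by (rule uniform_decay_uptoD) simp_all
  then have "uniform_decay waves (\<lambda>p. deriv (fam_dNt_dpsi p)) 0 m"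
    by (subst uniform_decay_cong[where g = "\<lambda>p x. ((fst p * 3 * (speed (fst p))\<^sup>2)
        * (fam_inv_n p x * fam_inv_n p x) + (- (fst p * \<sigma>))) * (deriv (fam_Nt p) x
        * (fam_inv_n p x * fam_inv_n p x * (fam_dNt_dpsi p x * fam_dNt_dpsi p x)))"])
      (simp_all add: waves_ode(5) algebra_simps)
  then show ?thesis by (rule uniform_decay_deriv[THEN iffD1])
qed

lemma waves_decay_upto_Suc: "waves_decay_upto m \<Longrightarrow> waves_decay_upto (Suc m)"
proof -
  assume decay: "waves_decay_upto m"
  then have Nt: "uniform_decay_upto waves fam_Nt decay_rate m"
    and psi: "uniform_decay_upto waves fam_psi decay_rate m"
    and E: "uniform_decay_upto waves fam_Eexp decay_rate m"
    and inv: "uniform_decay_upto waves fam_inv_n 0 m"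
    and Z: "uniform_decay_upto waves fam_dNt_dpsi 0 m"
    unfolding waves_decay_upto_def by blast+
  have psi': "uniform_decay_upto waves fam_psi decay_rate (Suc m)"
    using psi uniform_decay_psi_Suc[OF decay] uniform_decay_upto_Suc by blast
  have Nt': "uniform_decay_upto waves fam_Nt decay_rate (Suc m)"
    using Nt uniform_decay_Nt_Suc[OF psi' Z] uniform_decay_upto_Suc by blast
  have "uniform_decay_upto waves fam_Eexp decay_rate (Suc m)"
    using E uniform_decay_Eexp_Suc[OF E psi'] uniform_decay_upto_Suc by blast
  moreover have "uniform_decay_upto waves fam_inv_n 0 (Suc m)"
    using inv uniform_decay_inv_n_Suc[OF inv Nt'] uniform_decay_upto_Suc by blast
  moreover have "uniform_decay_upto waves fam_dNt_dpsi 0 (Suc m)"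
    using Z uniform_decay_dNt_dpsi_Suc[OF inv Z Nt'] uniform_decay_upto_Suc by blast
  ultimately show ?thesis unfolding waves_decay_upto_def using psi' Nt' by blast
qed

lemma waves_decay_upto_all: "waves_decay_upto m"
  by (induction m) (auto intro: waves_decay_upto_0 waves_decay_upto_Suc)

lemma waves_uniform_decay:
  shows "uniform_decay waves fam_Nt decay_rate k" and "uniform_decay waves fam_psi decay_rate k"
    and "uniform_decay waves fam_E decay_rate k" and "uniform_decay waves fam_u decay_rate k"
proof -
  have Nt: "uniform_decay_upto waves fam_Nt decay_rate k"
    and inv: "uniform_decay_upto waves fam_inv_n 0 k"
    and psi: "uniform_decay_upto waves fam_psi decay_rate (Suc k)"
    using waves_decay_upto_all unfolding waves_decay_upto_def by blast+
  show "uniform_decay waves fam_Nt decay_rate k" "uniform_decay waves fam_psi decay_rate k"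
    using uniform_decay_uptoD[OF Nt, of k] uniform_decay_uptoD[OF psi, of k] by simp_all
  have "uniform_decay waves (\<lambda>p x. (- 1) * deriv (fam_psi p) x) decay_rate k"
    using uniform_decay_upto_cmult[OF uniform_decay_upto_deriv[OF psi], of "\<lambda>p. - 1" 1]
    by (auto dest: uniform_decay_uptoD)
  then show "uniform_decay waves fam_E decay_rate k"
    by (subst uniform_decay_cong[OF waves_ode(7)]) simp_all
  have "uniform_decay_upto waves (\<lambda>p x. speed (fst p) * (fam_Nt p x * fam_inv_n p x)) decay_rate k"
    using uniform_decay_upto_mult[OF Nt inv] waves_coeff_bounds(5)
    by (intro uniform_decay_upto_cmult) auto
  then show "uniform_decay waves fam_u decay_rate k"
    by (subst uniform_decay_cong[OF waves_ode(8)]) (auto dest: uniform_decay_uptoD)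
qed

lemma waves_quantities:
  assumes "(e, n, u, \<phi>) \<in> waves"
  shows "fam_Nt (e, n, u, \<phi>) = (\<lambda>x. (n x - 1) / e)" and "fam_E (e, n, u, \<phi>) = (\<lambda>x. - deriv \<phi> x / e)"
    and "\<bar>(deriv ^^ k) u \<xi>\<bar> / e = \<bar>(deriv ^^ k) (fam_u (e, n, u, \<phi>)) \<xi>\<bar>"
    and "\<bar>(deriv ^^ k) \<phi> \<xi>\<bar> / e = \<bar>(deriv ^^ k) (fam_psi (e, n, u, \<phi>)) \<xi>\<bar>"
proof -
  have "soliton \<sigma> \<gamma> e n u \<phi>" using assms by (auto elim: wavesE)
  then interpret I: soliton \<sigma> \<gamma> e n u \<phi> .
  show "fam_Nt (e, n, u, \<phi>) = (\<lambda>x. (n x - 1) / e)" by (simp add: fam_Nt_def I.Nt_def[abs_def])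
  show "fam_E (e, n, u, \<phi>) = (\<lambda>x. - deriv \<phi> x / e)" by (simp add: fam_E_def)
  show "\<bar>(deriv ^^ k) u \<xi>\<bar> / e = \<bar>(deriv ^^ k) (fam_u (e, n, u, \<phi>)) \<xi>\<bar>"
    using higher_deriv_divide_const[OF I.smooth_u] I.eps_pos by (simp add: fam_u_def)
  show "\<bar>(deriv ^^ k) \<phi> \<xi>\<bar> / e = \<bar>(deriv ^^ k) (fam_psi (e, n, u, \<phi>)) \<xi>\<bar>"
    using higher_deriv_divide_const[OF I.smooth_phi] I.eps_pos
    by (simp add: fam_psi_def I.psi_def[abs_def])
qed

lemma waves_derivative_bounds:
  assumes in_waves: "\<And>e n u \<phi>. P e n u \<phi> \<Longrightarrow> (e, n, u, \<phi>) \<in> waves"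
  shows "\<exists>C :: nat \<Rightarrow> real. (\<forall>k. C k > 0) \<and> (\<forall>e n u \<phi>. P e n u \<phi> \<longrightarrow> (\<forall>k \<xi>. \<xi> \<ge> 0 \<longrightarrow>
      \<bar>(deriv ^^ k) (\<lambda>x. (n x - 1) / e) \<xi>\<bar> + \<bar>(deriv ^^ k) (\<lambda>x. - deriv \<phi> x / e) \<xi>\<bar>
        \<le> C k * exp (- decay_rate * \<xi>) \<and>
      \<bar>(deriv ^^ k) u \<xi>\<bar> / e + \<bar>(deriv ^^ k) \<phi> \<xi>\<bar> / e \<le> C k * exp (- decay_rate * \<xi>)))"
proof -
  obtain C1 where "\<And>k. C1 k > 0" and C1: "\<And>k p x. p \<in> waves \<Longrightarrow> x \<ge> 0 \<Longrightarrow>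
      \<bar>(deriv ^^ k) (fam_Nt p) x\<bar> + \<bar>(deriv ^^ k) (fam_E p) x\<bar> \<le> C1 k * exp (- decay_rate * x)"
    using uniform_decay_sum_all_orders[OF waves_uniform_decay(1,3)] by blast
  obtain C2 where "\<And>k. C2 k > 0" and C2: "\<And>k p x. p \<in> waves \<Longrightarrow> x \<ge> 0 \<Longrightarrow>
      \<bar>(deriv ^^ k) (fam_u p) x\<bar> + \<bar>(deriv ^^ k) (fam_psi p) x\<bar> \<le> C2 k * exp (- decay_rate * x)"
    using uniform_decay_sum_all_orders[OF waves_uniform_decay(4,2)] by blast
  have "\<forall>e n u \<phi>. P e n u \<phi> \<longrightarrow> (\<forall>k \<xi>. \<xi> \<ge> 0 \<longrightarrow>
      \<bar>(deriv ^^ k) (\<lambda>x. (n x - 1) / e) \<xi>\<bar> + \<bar>(deriv ^^ k) (\<lambda>x. - deriv \<phi> x / e) \<xi>\<bar>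
        \<le> (C1 k + C2 k) * exp (- decay_rate * \<xi>) \<and>
      \<bar>(deriv ^^ k) u \<xi>\<bar> / e + \<bar>(deriv ^^ k) \<phi> \<xi>\<bar> / e \<le> (C1 k + C2 k) * exp (- decay_rate * \<xi>))"
  proof (intro allI impI)
    fix e n u \<phi> k and \<xi> :: real
    assume "P e n u \<phi>" and \<xi>: "\<xi> \<ge> 0"
    from \<open>P e n u \<phi>\<close> have p: "(e, n, u, \<phi>) \<in> waves" by (rule in_waves)
    have "0 < C1 k * exp (- decay_rate * \<xi>)" "0 < C2 k * exp (- decay_rate * \<xi>)"
      using \<open>\<And>k. C1 k > 0\<close> \<open>\<And>k. C2 k > 0\<close> by simp_all
    then show "\<bar>(deriv ^^ k) (\<lambda>x. (n x - 1) / e) \<xi>\<bar> + \<bar>(deriv ^^ k) (\<lambda>x. - deriv \<phi> x / e) \<xi>\<bar>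
        \<le> (C1 k + C2 k) * exp (- decay_rate * \<xi>) \<and>
      \<bar>(deriv ^^ k) u \<xi>\<bar> / e + \<bar>(deriv ^^ k) \<phi> \<xi>\<bar> / e \<le> (C1 k + C2 k) * exp (- decay_rate * \<xi>)"
      using C1[OF p \<xi>, of k] C2[OF p \<xi>, of k] unfolding waves_quantities[OF p] distrib_right by linarith
  qed
  moreover have "\<forall>k. C1 k + C2 k > 0" using \<open>\<And>k. C1 k > 0\<close> \<open>\<And>k. C2 k > 0\<close> by (simp add: add_pos_pos)
  ultimately show ?thesis by (intro exI[of _ "\<lambda>k. C1 k + C2 k"] conjI)
qed

end

theorem proposition4p3:
  fixes \<sigma> \<gamma> :: real
  assumes "\<sigma> \<ge> 0" and "\<gamma> > 0"
  shows "\<exists>C_star \<epsilon>1 :: real. C_star > 0 \<and> \<epsilon>1 > 0 \<and>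
           (\<exists>C :: nat \<Rightarrow> real. (\<forall>k. C k > 0) \<and>
             (\<forall>\<epsilon> n u \<phi>. 0 < \<epsilon> \<and> \<epsilon> < \<epsilon>1 \<and> solitary_wave \<sigma> \<gamma> \<epsilon> n u \<phi> \<longrightarrow>
               (\<forall>k \<xi>. \<xi> \<ge> 0 \<longrightarrow>
                  \<bar>(deriv ^^ k) (\<lambda>x. (n x - 1) / \<epsilon>) \<xi>\<bar>
                    + \<bar>(deriv ^^ k) (\<lambda>x. - deriv \<phi> x / \<epsilon>) \<xi>\<bar> \<le> C k * exp (- C_star * \<xi>) \<and>
                  \<bar>(deriv ^^ k) u \<xi>\<bar> / \<epsilon> + \<bar>(deriv ^^ k) \<phi> \<xi>\<bar> / \<epsilon>
                    \<le> C k * exp (- C_star * \<xi>))))"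
proof -
  interpret wave_params \<sigma> \<gamma> using assms by unfold_locales
  obtain \<epsilon>1 where "\<epsilon>1 > 0" and small: "\<forall>e. 0 < e \<and> e < \<epsilon>1 \<longrightarrow> small_eps e"
    using small_eps_exists by blast
  have "(\<epsilon>, n, u, \<phi>) \<in> waves" if "0 < \<epsilon> \<and> \<epsilon> < \<epsilon>1 \<and> solitary_wave \<sigma> \<gamma> \<epsilon> n u \<phi>" for \<epsilon> n u \<phi>
    using that small unfolding waves_def by blast
  then have "\<exists>C :: nat \<Rightarrow> real. (\<forall>k. C k > 0) \<and>
      (\<forall>\<epsilon> n u \<phi>. 0 < \<epsilon> \<and> \<epsilon> < \<epsilon>1 \<and> solitary_wave \<sigma> \<gamma> \<epsilon> n u \<phi> \<longrightarrow> (\<forall>k \<xi>. \<xi> \<ge> 0 \<longrightarrow>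
        \<bar>(deriv ^^ k) (\<lambda>x. (n x - 1) / \<epsilon>) \<xi>\<bar> + \<bar>(deriv ^^ k) (\<lambda>x. - deriv \<phi> x / \<epsilon>) \<xi>\<bar>
          \<le> C k * exp (- decay_rate * \<xi>) \<and>
        \<bar>(deriv ^^ k) u \<xi>\<bar> / \<epsilon> + \<bar>(deriv ^^ k) \<phi> \<xi>\<bar> / \<epsilon> \<le> C k * exp (- decay_rate * \<xi>)))"
    by (rule waves_derivative_bounds)
  with decay_rate_pos \<open>\<epsilon>1 > 0\<close> show ?thesis by (intro exI[of _ decay_rate, OF exI[of _ \<epsilon>1]] conjI)
qed

end
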